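(* Let $\Pi=(t_k)_{k\in\mathbb{Z}}$ be a sampling sequence with constants $0<\delta\le\Delta$, let $\chi$ be a kernel satisfying $(\chi1)$–$(\chi4)$ with associated function $L$ and $\varphi$-function $\psi$ (from $(\chi3)$), and suppose $L$ satisfies $(L1)$ and $(L2)$. Let $\varphi$ be a convex $\varphi$-function satisfying condition (H) with a convex $\varphi$-function $\eta$, and let $f\in L^{\varphi+\eta}(\mathbb{R})$. Fix $0<\alpha<1$ and suppose there are constants $M_1>0$, $\alpha_0>0$ (depending on $\alpha$ and $L$) such that $$ w\int_{|y|>1/w^{\alpha}} L(wy)\,dy\le M_1 w^{-\alpha_0}$$ for all sufficiently large $w>0$. Then there exist $\mu>0$, $\lambda_0>0$ and $\lambda>0$ such that, with $\omega(f,\delta')_\eta:=\sup_{|t|\le\delta'} I^{\eta}[\lambda(f(\cdot+t)-f(\cdot))]$, for every sufficiently large $w>0$, $$I^{\varphi}[\mu(S_wf-f)]\le \frac{\|L\|_1}{3\delta\, m_{0,\Pi}(L)}\,\omega(f,1/w^{\alpha})_\eta+\frac{M_1 I^{\eta}[\lambda_0 f]}{3\delta\, m_{0,\Pi}(L)}\,w^{-\alpha_0}+\frac{\Delta}{3\delta}\,\omega(f,\Delta/w)_\eta+\frac{I^{\varphi}[\lambda_0 f]}{3}\,w^{-\theta_0},$$ where $\theta_0>0$ is the constant of condition $(\chi4)$.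
   Context: A $\varphi$-function is a continuous non-decreasing $\varphi:[0,\infty)\to[0,\infty)$ with $\varphi(0)=0$, $\varphi(u)>0$ for $u>0$, and $\varphi(u)\to+\infty$ as $u\to+\infty$. For a $\varphi$-function $\varphi$ and measurable $f:\mathbb{R}\to\mathbb{R}$, $I^{\varphi}[f]:=\int_{\mathbb{R}}\varphi(|f(x)|)\,dx$, and the Orlicz space is $L^{\varphi}(\mathbb{R})=\{f \text{ measurable}: I^{\varphi}[\lambda f]<\infty \text{ for some }\lambda>0\}$; $L^{\varphi+\eta}(\mathbb{R})$ is the Orlicz space generated by the $\varphi$-function $\varphi+\eta$. A sampling sequence $\Pi=(t_k)_{k\in\mathbb{Z}}$ is a sequence of reals with $t_k<t_{k+1}$, $t_k\to\pm\infty$ as $k\to\pm\infty$, and constants $0<\delta\le\Delta$ with $\delta\le \Delta_k:=t_{k+1}-t_k\le\Delta$ for all $k$. A kernel is $\chi:\mathbb{R}\times\mathbb{R}\to\mathbb{R}$ with: $(\chi1)$ $k\mapsto\chi(wx-t_k,u)\in\ell^1(\mathbb{Z})$ for all $(x,u)\in\mathbb{R}^2$, $w>0$; $(\chi2)$ $\chi(x,0)=0$ for all $x$; $(\chi3)$ there exist a measurable $L:\mathbb{R}\to[0,\infty)$ and a $\varphi$-function $\psi$ with $|\chi(x,u)-\chi(x,v)|\le L(x)\psi(|u-v|)$ for all $x,u,v$; $(\chi4)$ there is $\theta_0>0$ such that $\mathcal{T}_w(x):=\sup_{u\ne0}\left|\frac1u\sum_{k}\chi(wx-t_k,u)-1\right|=\mathcal{O}(w^{-\theta_0})$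 as $w\to+\infty$, uniformly in $x\in\mathbb{R}$. Conditions on $L$: $(L1)$ $L\in L^1(\mathbb{R})$ and $L$ is bounded in a neighborhood of $0$; $(L2)$ there is $\beta_0>0$ with $\sup_{u\in\mathbb{R}}\sum_k L(u-t_k)|u-t_k|^{\beta_0}<+\infty$. Set $m_{0,\Pi}(L):=\sup_{u\in\mathbb{R}}\sum_k L(u-t_k)$ (finite under $(L1)$,$(L2)$). Condition (H): there is a $\varphi$-function $\eta$ such that for every $\lambda\in(0,1)$ there is $C_\lambda\in(0,1)$ with $\varphi(C_\lambda\psi(u))\le\eta(\lambda u)$ for all $u\ge0$, where $\psi$ is from $(\chi3)$. The nonlinear sampling Kantorovich operators are $(S_wf)(x):=\sum_{k\in\mathbb{Z}}\chi\!\left(wx-t_k,\frac{w}{\Delta_k}\int_{t_k/w}^{t_{k+1}/w}f(u)\,du\right)$, $x\in\mathbb{R}$, $w>0$, for locally integrable $f$ for which the series converges for every $x$. *)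

theory Defs
  imports "HOL-Analysis.Analysis"
begin

definition phi_function :: "(real \<Rightarrow> real) \<Rightarrow> bool" where
  "phi_function \<phi> \<longleftrightarrow> continuous_on {0..} \<phi> \<and> mono_on {0..} \<phi> \<and> \<phi> 0 = 0
     \<and> (\<forall>u>0. \<phi> u > 0) \<and> filterlim \<phi> at_top at_top"

definition modular :: "(real \<Rightarrow> real) \<Rightarrow> (real \<Rightarrow> real) \<Rightarrow> ennreal" where
  "modular \<phi> f = (\<integral>\<^sup>+ x. ennreal (\<phi> \<bar>f x\<bar>) \<partial>lebesgue)"

definition orlicz :: "(real \<Rightarrow> real) \<Rightarrow> (real \<Rightarrow> real) set" where
  "orlicz \<phi> = {f. f \<in> borel_measurable lebesgue \<and> (\<exists>lam>0. modular \<phi> (\<lambda>x. lam * f x) < \<infinity>)}"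

definition sampling_sequence :: "(int \<Rightarrow> real) \<Rightarrow> real \<Rightarrow> real \<Rightarrow> bool" where
  "sampling_sequence t \<delta> \<Delta> \<longleftrightarrow> 0 < \<delta> \<and> \<delta> \<le> \<Delta> \<and> (\<forall>k. t k < t (k + 1))
     \<and> filterlim t at_top at_top \<and> filterlim t at_bot at_bot
     \<and> (\<forall>k. \<delta> \<le> t (k + 1) - t k \<and> t (k + 1) - t k \<le> \<Delta>)"

definition kernel_chi1 :: "(int \<Rightarrow> real) \<Rightarrow> (real \<Rightarrow> real \<Rightarrow> real) \<Rightarrow> bool" where
  "kernel_chi1 t chi \<longleftrightarrow> (\<forall>x u w. w > 0 \<longrightarrow> (\<lambda>k. \<bar>chi (w * x - t k) u\<bar>) summable_on UNIV)"

definition kernel_chi2 :: "(real \<Rightarrow> real \<Rightarrow> real) \<Rightarrow> bool" where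
  "kernel_chi2 chi \<longleftrightarrow> (\<forall>x. chi x 0 = 0)"

definition kernel_chi3 :: "(real \<Rightarrow> real \<Rightarrow> real) \<Rightarrow> (real \<Rightarrow> real) \<Rightarrow> (real \<Rightarrow> real) \<Rightarrow> bool" where
  "kernel_chi3 chi L \<psi> \<longleftrightarrow> L \<in> borel_measurable lebesgue \<and> (\<forall>x. 0 \<le> L x) \<and> phi_function \<psi>
     \<and> (\<forall>x u v. \<bar>chi x u - chi x v\<bar> \<le> L x * \<psi> \<bar>u - v\<bar>)"

definition kernel_chi4 :: "(int \<Rightarrow> real) \<Rightarrow> (real \<Rightarrow> real \<Rightarrow> real) \<Rightarrow> real \<Rightarrow> bool" where
  "kernel_chi4 t chi \<theta>\<^sub>0 \<longleftrightarrow> \<theta>\<^sub>0 > 0 \<and> (\<exists>C W. \<forall>w\<ge>W. \<forall>x. \<forall>u. u \<noteq> 0 \<longrightarrow>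
      \<bar>(1 / u) * (\<Sum>\<^sub>\<infinity>k. chi (w * x - t k) u) - 1\<bar> \<le> C * w powr (- \<theta>\<^sub>0))"

definition cond_L1 :: "(real \<Rightarrow> real) \<Rightarrow> bool" where
  "cond_L1 L \<longleftrightarrow> integrable lebesgue L \<and> (\<exists>r>0. \<exists>B. \<forall>x. \<bar>x\<bar> < r \<longrightarrow> L x \<le> B)"

definition cond_L2 :: "(int \<Rightarrow> real) \<Rightarrow> (real \<Rightarrow> real) \<Rightarrow> bool" where
  "cond_L2 t L \<longleftrightarrow> (\<exists>\<beta>\<^sub>0>0. \<exists>B. \<forall>u.
      (\<lambda>k. L (u - t k) * \<bar>u - t k\<bar> powr \<beta>\<^sub>0) summable_on UNIV
      \<and> (\<Sum>\<^sub>\<infinity>k. L (u - t k) * \<bar>u - t k\<bar> powr \<beta>\<^sub>0) \<le> B)"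

definition m0 :: "(int \<Rightarrow> real) \<Rightarrow> (real \<Rightarrow> real) \<Rightarrow> real" where
  "m0 t L = (SUP u. (\<Sum>\<^sub>\<infinity>k. L (u - t k)))"

definition cond_H :: "(real \<Rightarrow> real) \<Rightarrow> (real \<Rightarrow> real) \<Rightarrow> (real \<Rightarrow> real) \<Rightarrow> bool" where
  "cond_H \<phi> \<eta> \<psi> \<longleftrightarrow> phi_function \<eta> \<and> (\<forall>lam. 0 < lam \<and> lam < 1 \<longrightarrow>
      (\<exists>C. 0 < C \<and> C < 1 \<and> (\<forall>u\<ge>0. \<phi> (C * \<psi> u) \<le> \<eta> (lam * u))))"

definition sampling_kantorovich ::
  "(int \<Rightarrow> real) \<Rightarrow> (real \<Rightarrow> real \<Rightarrow> real) \<Rightarrow> real \<Rightarrow> (real \<Rightarrow> real) \<Rightarrow> real \<Rightarrow> real" where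
  "sampling_kantorovich t chi w f x =
     (\<Sum>\<^sub>\<infinity>k. chi (w * x - t k)
        ((w / (t (k + 1) - t k)) * (LINT u:{t k / w .. t (k + 1) / w}|lebesgue. f u)))"

definition modulus :: "(real \<Rightarrow> real) \<Rightarrow> real \<Rightarrow> (real \<Rightarrow> real) \<Rightarrow> real \<Rightarrow> ennreal" where
  "modulus \<eta> lam f d = (SUP s\<in>{s. \<bar>s\<bar> \<le> d}. modular \<eta> (\<lambda>x. lam * (f (x + s) - f x)))"

end

(* Write V_k for the mean of f over [t_k/w, t_(k+1)/w] and W_k for the mean of f over
   [x, x + (t_(k+1) - t_k)/w]. Then S_w f(x) - f(x) is the sum of
     sum_k [chi(wx - t_k, V_k) - chi(wx - t_k, W_k)],  sum_k [chi(wx - t_k, W_k) - chi(wx - t_k, f x)]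
   and sum_k chi(wx - t_k, f x) - f x, so convexity splits phi(mu |S_w f - f|) into thirds.
   In the first two sums the Lipschitz condition (chi3), Jensen's inequality for the weights
   L(wx - t_k)/m_0 and condition (H) replace phi by eta, and Jensen's inequality on the averaging
   intervals bounds eta of a mean by the mean of eta. After integration in x, the first term becomes
   the integral of L(wy) I^eta[(f(. + y) - f)/2] dy, which is split at |y| = w^(-alpha) into the
   modulus of smoothness and the tail of L, and the second term becomes the modulus of smoothness at
   Delta/w. By (chi4) the third term is at most w^(-theta_0) phi(|f x|). *)

theory Submission
  imports Defs "HOL-Probability.Probability_Measure"
begin

section \<open>\<phi>-functions\<close>

lemma phi_function_0: "phi_function g \<Longrightarrow> g 0 = 0"
  unfolding phi_function_def by auto

lemma phi_function_mono: "phi_function g \<Longrightarrow> 0 \<le> u \<Longrightarrow> u \<le> v \<Longrightarrow> g u \<le> g v"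
  unfolding phi_function_def by (meson atLeast_iff mono_onD order_trans)

lemma phi_function_nonneg: "phi_function g \<Longrightarrow> 0 \<le> u \<Longrightarrow> 0 \<le> g u"
  using phi_function_mono[of g 0 u] phi_function_0[of g] by simp

lemma phi_function_pos: "phi_function g \<Longrightarrow> 0 < u \<Longrightarrow> 0 < g u"
  unfolding phi_function_def by auto

lemma phi_function_measurable:
  assumes "phi_function g" "h \<in> borel_measurable M"
  shows "(\<lambda>x. g \<bar>h x\<bar>) \<in> borel_measurable M"
proof -
  have "continuous_on {0..} g" using assms(1) unfolding phi_function_def by auto
  then have "continuous_on UNIV (\<lambda>v. g (max v 0))"
    by (rule continuous_on_compose2) (auto intro!: continuous_intros)
  then have "(\<lambda>v. g (max v 0)) \<in> borel_measurable borel"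
    by (rule borel_measurable_continuous_onI)
  then have "(\<lambda>x. g (max \<bar>h x\<bar> 0)) \<in> borel_measurable M"
    using assms(2) by measurable
  then show ?thesis by simp
qed

lemma convex_on_scale_le:
  assumes "convex_on {0..} g" "g 0 = 0" "0 \<le> s" "s \<le> 1" "0 \<le> v"
  shows "g (s * v) \<le> s * g v"
  using convex_onD[OF assms(1), of s 0 v] assms by simp

lemma convex_phi_function_extension:
  assumes "phi_function g" "convex_on {0..} g"
  shows "convex_on UNIV (\<lambda>v. g (max v 0))"
proof (rule convex_onI)
  fix s x y :: real assume s: "0 < s" "s < 1"
  have "max ((1 - s) * x + s * y) 0 \<le> (1 - s) * max x 0 + s * max y 0"
    using s by (intro max.boundedI add_mono mult_left_mono) auto
  then have "g (max ((1 - s) * x + s * y) 0) \<le> g ((1 - s) * max x 0 + s * max y 0)"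
    by (intro phi_function_mono[OF assms(1)]) auto
  also have "\<dots> \<le> (1 - s) * g (max x 0) + s * g (max y 0)"
    using convex_onD[OF assms(2), of s "max x 0" "max y 0"] s by auto
  finally show "g (max ((1 - s) *\<^sub>R x + s *\<^sub>R y) 0) \<le> (1 - s) * g (max x 0) + s * g (max y 0)"
    by simp
qed (rule convex_UNIV)

lemma convex_on_mean3:
  fixes g :: "real \<Rightarrow> real"
  assumes "convex_on {0..} g" "0 \<le> a" "0 \<le> b" "0 \<le> c"
  shows "g ((a + b + c) / 3) \<le> (g a + g b + g c) / 3"
proof -
  have "g (\<Sum>i\<in>{0::nat,1,2}. (1/3) *\<^sub>R ([a,b,c] ! i)) \<le> (\<Sum>i\<in>{0::nat,1,2}. (1/3) * g ([a,b,c] ! i))"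
    by (rule convex_on_sum[OF _ _ assms(1)]) (use assms in \<open>auto simp: less_Suc_eq\<close>)
  then show ?thesis by (simp add: field_simps)
qed

text \<open>Jensen's inequality for weights of total mass at most \<open>m\<close>; the missing mass is put at \<open>0\<close>.\<close>
lemma convex_on_weighted_sum_le:
  assumes g: "convex_on {0..} g" "g 0 = 0"
    and F: "finite F" and a: "\<And>k. k \<in> F \<Longrightarrow> 0 \<le> a k" and am: "sum a F \<le> m" and m: "0 < m"
    and y: "\<And>k. k \<in> F \<Longrightarrow> 0 \<le> y k"
  shows "g (\<Sum>k\<in>F. a k * y k) \<le> (\<Sum>k\<in>F. a k / m * g (m * y k))"
proof (cases "sum a F = 0")
  case True
  then have "\<And>k. k \<in> F \<Longrightarrow> a k = 0" using sum_nonneg_eq_0_iff[OF F] a by blast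
  then show ?thesis using g(2) by simp
next
  case False
  define s where "s = sum a F"
  have s: "0 < s" using False a s_def by (metis sum_nonneg order_le_less)
  have "g (\<Sum>k\<in>F. a k * y k) = g ((s / m) * (\<Sum>k\<in>F. (a k / s) *\<^sub>R (m * y k)))"
    using s m by (simp add: sum_distrib_left field_simps)
  also have "\<dots> \<le> (s / m) * g (\<Sum>k\<in>F. (a k / s) *\<^sub>R (m * y k))"
    by (rule convex_on_scale_le[OF g]) (use s m am a y in \<open>auto simp: s_def intro!: sum_nonneg\<close>)
  also have "\<dots> \<le> (s / m) * (\<Sum>k\<in>F. (a k / s) * g (m * y k))"
  proof (rule mult_left_mono)
    show "g (\<Sum>k\<in>F. (a k / s) *\<^sub>R (m * y k)) \<le> (\<Sum>k\<in>F. (a k / s) * g (m * y k))"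
      by (rule convex_on_sum[OF F _ g(1)])
         (use False s a y m in \<open>auto simp: s_def sum_divide_distrib[symmetric]\<close>)
  qed (use s m in auto)
  also have "\<dots> = (\<Sum>k\<in>F. a k / m * g (m * y k))"
    using s m by (simp add: sum_distrib_left field_simps)
  finally show ?thesis .
qed

text \<open>As \<open>g\<close> tends to infinity, a bound on \<open>g\<close> of the partial sums bounds the partial sums.\<close>
lemma phi_function_infsum_le:
  assumes g: "phi_function g" and b: "\<And>k. 0 \<le> b k"
    and R: "\<And>F. finite F \<Longrightarrow> g (sum b F) \<le> R"
  shows "b summable_on UNIV" "g (infsum b UNIV) \<le> R"
proof -
  have "eventually (\<lambda>u. R + 1 \<le> g u) at_top"
    using g unfolding phi_function_def by (simp add: filterlim_at_top)
  then obtain M where M: "\<And>u. u \<ge> M \<Longrightarrow> g u \<ge> R + 1"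
    by (auto simp: eventually_at_top_linorder)
  have "sum b F \<le> M" if "finite F" for F
  proof (rule ccontr)
    assume "\<not> sum b F \<le> M"
    with M[of "sum b F"] R[OF that] show False by simp
  qed
  then show sb: "b summable_on UNIV"
    using b by (intro nonneg_bdd_above_summable_on bdd_aboveI2) auto
  have "((\<lambda>F. g (sum b F)) \<longlongrightarrow> g (infsum b UNIV)) (finite_subsets_at_top UNIV)"
    using g b unfolding phi_function_def
    by (intro continuous_on_tendsto_compose[OF _ infsum_tendsto[OF sb]])
       (auto intro!: always_eventually sum_nonneg infsum_nonneg)
  then show "g (infsum b UNIV) \<le> R"
    by (rule tendsto_upperbound) (use R in \<open>auto intro!: eventually_finite_subsets_at_top_weakI\<close>)
qed

lemma convex_phi_function_linear_lower_bound:
  assumes g: "phi_function g" "convex_on {0..} g" and v: "0 \<le> v"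
  shows "v \<le> 1 + g v / g 1"
proof (cases "v \<le> 1")
  case True
  have "0 \<le> g v / g 1" using phi_function_nonneg[OF g(1) v] phi_function_pos[OF g(1), of 1] by simp
  then show ?thesis using True by linarith
next
  case False
  have "g 1 \<le> g v / v"
    using convex_on_scale_le[OF g(2) phi_function_0[OF g(1)], of "1 / v" v] False by simp
  then show ?thesis using False phi_function_pos[OF g(1), of 1] by (simp add: field_simps)
qed

section \<open>Sums over the integers\<close>

text \<open>Taken in \<open>ennreal\<close>, so that a divergent sum is \<open>\<infinity>\<close> rather than the junk value of \<open>infsum\<close>.\<close>
definition nn_sum :: "(int \<Rightarrow> real) \<Rightarrow> ennreal" where
  "nn_sum g = (\<integral>\<^sup>+k. ennreal (g k) \<partial>count_space UNIV)"

lemma nn_sum_eq_infsum: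
  assumes "\<And>k. 0 \<le> g k" "g summable_on UNIV"
  shows "nn_sum g = ennreal (infsum g UNIV)"
proof -
  have "Infinite_Sum.abs_summable_on g UNIV"
    using assms(2) summable_on_iff_abs_summable_on_real by blast
  then have "Infinite_Set_Sum.abs_summable_on g UNIV"
    using abs_summable_equivalent by blast
  from nn_integral_conv_infsetsum[OF this] infsetsum_infsum[OF this] show ?thesis
    unfolding nn_sum_def using assms(1) by simp
qed

lemma nn_sum_finite_imp_summable:
  assumes "\<And>k. 0 \<le> g k" "nn_sum g < \<infinity>"
  shows "g summable_on UNIV"
proof -
  have "integrable (count_space UNIV) g"
    by (rule integrableI_bounded) (use assms in \<open>auto simp: nn_sum_def\<close>)
  then have "Infinite_Set_Sum.abs_summable_on g UNIV"
    by (simp add: abs_summable_on_def)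
  then have "Infinite_Sum.abs_summable_on g UNIV"
    using abs_summable_equivalent by blast
  then show ?thesis using abs_summable_summable by blast
qed

lemma nn_sum_finite_sums_le:
  assumes "\<And>k. 0 \<le> g k" "nn_sum g < \<infinity>" "finite F"
  shows "sum g F \<le> infsum g UNIV"
  using finite_sum_le_infsum[OF nn_sum_finite_imp_summable[OF assms(1,2)] assms(3)] assms(1) by simp

lemma nn_sum_le:
  assumes "\<And>k. 0 \<le> g k" "\<And>F. finite F \<Longrightarrow> sum g F \<le> m"
  shows "nn_sum g \<le> ennreal m"
proof -
  have "g summable_on UNIV"
    using assms by (intro nonneg_bdd_above_summable_on bdd_aboveI2) auto
  then show ?thesis
    using assms by (simp add: nn_sum_eq_infsum ennreal_leI infsum_le_finite_sums)
qed

lemma infsum_abs_diff_le: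
  fixes f g b :: "'a \<Rightarrow> real"
  assumes g: "g summable_on A" and b: "b summable_on A" and fg: "\<And>k. \<bar>f k - g k\<bar> \<le> b k"
  shows "f summable_on A" "\<bar>infsum f A - infsum g A\<bar> \<le> infsum b A"
proof -
  have abs_diff: "(\<lambda>k. \<bar>f k - g k\<bar>) summable_on A"
    by (rule summable_on_comparison_test[OF b]) (use fg in auto)
  then have diff: "(\<lambda>k. f k - g k) summable_on A"
    using summable_on_iff_abs_summable_on_real[of "\<lambda>k. f k - g k" A] by simp
  then show f: "f summable_on A"
    using summable_on_add[OF diff g] by simp
  have "infsum f A = infsum (\<lambda>k. (f k - g k) + g k) A" by simp
  also have "\<dots> = infsum (\<lambda>k. f k - g k) A + infsum g A" by (rule infsum_add[OF diff g])
  finally have "\<bar>infsum f A - infsum g A\<bar> = \<bar>infsum (\<lambda>k. f k - g k) A\<bar>" by simp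
  also have "\<dots> \<le> infsum (\<lambda>k. \<bar>f k - g k\<bar>) A"
    using norm_infsum_bound[of "\<lambda>k. f k - g k" A] abs_diff by (simp add: real_norm_def)
  also have "\<dots> \<le> infsum b A"
    by (rule infsum_mono[OF abs_diff b fg])
  finally show "\<bar>infsum f A - infsum g A\<bar> \<le> infsum b A" .
qed

lemma borel_measurable_nn_integral_count_space:
  fixes g :: "int \<Rightarrow> 'a \<Rightarrow> ennreal"
  assumes "\<And>k. g k \<in> borel_measurable M"
  shows "(\<lambda>x. \<integral>\<^sup>+k. g k x \<partial>count_space UNIV) \<in> borel_measurable M"
proof -
  interpret int_count: sigma_finite_measure "count_space (UNIV :: int set)"
    by (rule sigma_finite_measure_count_space_countable) simp
  have "(\<lambda>(k, x). g k x) \<in> borel_measurable (count_space UNIV \<Otimes>\<^sub>M M)"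
    by (rule measurable_pair_measure_countable1) (use assms in auto)
  then have "(\<lambda>(x, k). g k x) \<in> borel_measurable (M \<Otimes>\<^sub>M count_space UNIV)"
    using measurable_pair_swap_iff[of "\<lambda>(k, x). g k x"] by (simp add: case_prod_beta')
  then show ?thesis
    using int_count.borel_measurable_nn_integral[where f="\<lambda>x k. g k x" and N=M] by simp
qed

section \<open>Sampling sequences and discrete kernel sums\<close>

lemma sampling_sequenceD:
  assumes "sampling_sequence t \<delta> \<Delta>"
  shows "0 < \<delta>" "\<delta> \<le> \<Delta>" "\<delta> \<le> t (k + 1) - t k" "t (k + 1) - t k \<le> \<Delta>"
  using assms unfolding sampling_sequence_def by auto

lemma sampling_sequence_mono:
  assumes "sampling_sequence t \<delta> \<Delta>" "k \<le> j"
  shows "t k \<le> t j"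
  using assms(2)
proof (induction j rule: int_ge_induct)
  case (step i)
  then show ?case using sampling_sequenceD(1)[OF assms(1)] sampling_sequenceD(3)[OF assms(1), of i]
    by linarith
qed simp

lemma sampling_sequence_separated:
  assumes "sampling_sequence t \<delta> \<Delta>" "k \<noteq> j"
  shows "\<delta> \<le> \<bar>t j - t k\<bar>"
proof -
  have "\<delta> \<le> t b - t a" if "a < b" for a b
    using sampling_sequenceD(3)[OF assms(1), of a] sampling_sequence_mono[OF assms(1), of "a + 1" b] that
    by linarith
  then show ?thesis using assms(2) by (cases "k < j") (fastforce simp: not_less_iff_gr_or_eq)+
qed

lemma sampling_interval_length:
  assumes "sampling_sequence t \<delta> \<Delta>" "0 < w"
  shows "t k / w < t (k + 1) / w" "1 / (t (k + 1) / w - t k / w) = w / (t (k + 1) - t k)"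
    "t (k + 1) / w - t k / w \<le> \<Delta> / w" "w / (t (k + 1) - t k) \<le> w / \<delta>"
  using sampling_sequenceD(3,4)[OF assms(1), of k] sampling_sequenceD(1)[OF assms(1)] assms(2)
  by (auto simp: divide_strict_right_mono diff_divide_distrib[symmetric] divide_right_mono frac_le)

lemma sum_near_samples_le:
  fixes L :: "real \<Rightarrow> real"
  assumes samp: "sampling_sequence t \<delta> \<Delta>" and r: "2 * r \<le> \<delta>"
    and B: "\<And>x. \<bar>x\<bar> < r \<Longrightarrow> L x \<le> B" and F: "finite F"
  shows "(\<Sum>k\<in>F \<inter> {k. \<bar>u - t k\<bar> < r}. L (u - t k)) \<le> max B 0"
proof (cases "F \<inter> {k. \<bar>u - t k\<bar> < r} = {}")
  case False
  then obtain j where j: "j \<in> F" "\<bar>u - t j\<bar> < r" by auto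
  have "F \<inter> {k. \<bar>u - t k\<bar> < r} = {j}"
    using j sampling_sequence_separated[OF samp, of _ j] r by fastforce
  then show ?thesis using max.coboundedI1[OF B[OF j(2)], of 0] by simp
qed simp

text \<open>At most one sample lies within \<open>\<delta> / 2\<close> of \<open>u\<close>, where (L1) bounds \<open>L\<close>; the remaining
  terms are controlled by the moment condition (L2).\<close>
lemma sampling_kernel_finite_sums_bounded:
  assumes samp: "sampling_sequence t \<delta> \<Delta>" and Lnn: "\<And>x. 0 \<le> L x"
    and L1: "cond_L1 L" and L2: "cond_L2 t L"
  shows "\<exists>B. \<forall>u F. finite F \<longrightarrow> (\<Sum>k\<in>F. L (u - t k)) \<le> B"
proof -
  obtain r0 B1 where r0: "r0 > 0" and B1: "\<And>x. \<bar>x\<bar> < r0 \<Longrightarrow> L x \<le> B1"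
    using L1 unfolding cond_L1_def by auto
  obtain \<beta> B2 where \<beta>: "\<beta> > 0" and B2: "\<And>u. (\<lambda>k. L (u - t k) * \<bar>u - t k\<bar> powr \<beta>) summable_on UNIV
      \<and> (\<Sum>\<^sub>\<infinity>k. L (u - t k) * \<bar>u - t k\<bar> powr \<beta>) \<le> B2"
    using L2 unfolding cond_L2_def by auto
  define r where "r = min r0 (\<delta> / 2)"
  have r: "0 < r" "2 * r \<le> \<delta>" using r0 sampling_sequenceD(1)[OF samp] by (auto simp: r_def)
  have "(\<Sum>k\<in>F. L (u - t k)) \<le> max B1 0 + B2 / r powr \<beta>" if F: "finite F" for u F
  proof -
    define S where "S = {k. \<bar>u - t k\<bar> < r}"
    have near: "(\<Sum>k\<in>F \<inter> S. L (u - t k)) \<le> max B1 0"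
      unfolding S_def by (rule sum_near_samples_le[OF samp r(2) _ F]) (use B1 r_def in auto)
    have "(\<Sum>k\<in>F - S. L (u - t k)) \<le> (\<Sum>k\<in>F - S. L (u - t k) * \<bar>u - t k\<bar> powr \<beta> / r powr \<beta>)"
    proof (rule sum_mono)
      fix k assume "k \<in> F - S"
      then have "1 \<le> \<bar>u - t k\<bar> powr \<beta> / r powr \<beta>"
        using r \<beta> by (auto simp: S_def intro: powr_mono2)
      then show "L (u - t k) \<le> L (u - t k) * \<bar>u - t k\<bar> powr \<beta> / r powr \<beta>"
        using mult_left_mono[OF _ Lnn] by fastforce
    qed
    also have "\<dots> \<le> B2 / r powr \<beta>"
      unfolding sum_divide_distrib[symmetric]
      using finite_sum_le_infsum[of _ UNIV "F - S"] B2[of u] F Lnn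
      by (intro divide_right_mono) (fastforce intro: order.trans)+
    finally show ?thesis using near sum.Int_Diff[OF F, of "\<lambda>k. L (u - t k)" S] by linarith
  qed
  then show ?thesis by blast
qed

lemma sampling_kernel_summable:
  assumes "sampling_sequence t \<delta> \<Delta>" "\<And>x. 0 \<le> L x" "cond_L1 L" "cond_L2 t L"
  shows "(\<lambda>k. L (u - t k)) summable_on UNIV"
  using sampling_kernel_finite_sums_bounded[OF assms] assms(2)
  by (auto intro!: nonneg_bdd_above_summable_on bdd_aboveI2)

lemma sampling_kernel_infsum_le_m0:
  assumes "sampling_sequence t \<delta> \<Delta>" "\<And>x. 0 \<le> L x" "cond_L1 L" "cond_L2 t L"
  shows "(\<Sum>\<^sub>\<infinity>k. L (u - t k)) \<le> m0 t L"
proof -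
  obtain B where B: "\<And>u F. finite F \<Longrightarrow> (\<Sum>k\<in>F. L (u - t k)) \<le> B"
    using sampling_kernel_finite_sums_bounded[OF assms] by blast
  have "(\<Sum>\<^sub>\<infinity>k. L (v - t k)) \<le> B" for v
    by (rule infsum_le_finite_sums[OF sampling_kernel_summable[OF assms] B])
  then show ?thesis unfolding m0_def by (intro cSUP_upper bdd_aboveI2) auto
qed

lemma sampling_kernel_finite_sum_le_m0:
  assumes "sampling_sequence t \<delta> \<Delta>" "\<And>x. 0 \<le> L x" "cond_L1 L" "cond_L2 t L" "finite F"
  shows "(\<Sum>k\<in>F. L (u - t k)) \<le> m0 t L"
proof -
  have "(\<Sum>k\<in>F. L (u - t k)) \<le> (\<Sum>\<^sub>\<infinity>k. L (u - t k))"
    by (rule finite_sum_le_infsum[OF sampling_kernel_summable[OF assms(1-4)] assms(5)]) (use assms(2) in auto)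
  also have "\<dots> \<le> m0 t L" by (rule sampling_kernel_infsum_le_m0[OF assms(1-4)])
  finally show ?thesis .
qed

lemma m0_pos:
  assumes samp: "sampling_sequence t \<delta> \<Delta>" and chi2: "kernel_chi2 chi" and chi3: "kernel_chi3 chi L \<psi>"
    and chi4: "kernel_chi4 t chi \<theta>\<^sub>0" and L1: "cond_L1 L" and L2: "cond_L2 t L"
  shows "0 < m0 t L"
proof (rule ccontr)
  assume m0: "\<not> 0 < m0 t L"
  have Lnn: "\<And>x. 0 \<le> L x" using chi3 unfolding kernel_chi3_def by auto
  have "L y = 0" for y
  proof -
    have "L (y + t 0 - t 0) \<le> (\<Sum>\<^sub>\<infinity>k. L (y + t 0 - t k))"
      using finite_sum_le_infsum[OF sampling_kernel_summable[OF samp Lnn L1 L2, of "y + t 0"], of "{0}"] Lnn by simp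
    also have "\<dots> \<le> m0 t L" by (rule sampling_kernel_infsum_le_m0[OF samp Lnn L1 L2])
    finally show ?thesis using Lnn[of y] m0 by simp
  qed
  then have chi0: "chi x u = 0" for x u
    using chi2 chi3 unfolding kernel_chi2_def kernel_chi3_def by (metis abs_le_zero_iff diff_0_right mult_zero_left)
  obtain C W where "\<theta>\<^sub>0 > 0" and CW: "\<And>w x u. w \<ge> W \<Longrightarrow> u \<noteq> 0 \<Longrightarrow>
      \<bar>(1 / u) * (\<Sum>\<^sub>\<infinity>k. chi (w * x - t k) u) - 1\<bar> \<le> C * w powr (- \<theta>\<^sub>0)"
    using chi4 unfolding kernel_chi4_def by blast
  then have "((\<lambda>w. C * w powr (- \<theta>\<^sub>0)) \<longlongrightarrow> C * 0) at_top"
    by (intro tendsto_mult tendsto_const tendsto_neg_powr filterlim_ident) auto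
  then have "eventually (\<lambda>w. C * w powr (- \<theta>\<^sub>0) < 1 \<and> W \<le> w) at_top"
    by (intro eventually_conj order_tendstoD eventually_ge_at_top) auto
  then obtain w where w: "C * w powr (- \<theta>\<^sub>0) < 1" "W \<le> w"
    unfolding eventually_at_top_linorder by blast
  have "\<bar>(1 / 1) * (\<Sum>\<^sub>\<infinity>k. chi (w * 0 - t k) 1) - 1\<bar> \<le> C * w powr (- \<theta>\<^sub>0)"
    by (rule CW[OF w(2)]) simp
  then show False using w(1) chi0 by simp
qed

lemma kernel_chi4_error_bound:
  assumes chi2: "kernel_chi2 chi" and chi4: "kernel_chi4 t chi \<theta>\<^sub>0"
  obtains C W where "0 < C" "\<And>w x v. W \<le> w \<Longrightarrow>
    \<bar>(\<Sum>\<^sub>\<infinity>k. chi (w * x - t k) v) - v\<bar> \<le> C * w powr (- \<theta>\<^sub>0) * \<bar>v\<bar>"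
proof -
  obtain C W where CW: "\<And>w x u. W \<le> w \<Longrightarrow> u \<noteq> 0 \<Longrightarrow>
      \<bar>(1 / u) * (\<Sum>\<^sub>\<infinity>k. chi (w * x - t k) u) - 1\<bar> \<le> C * w powr (- \<theta>\<^sub>0)"
    using chi4 unfolding kernel_chi4_def by blast
  have "\<bar>(\<Sum>\<^sub>\<infinity>k. chi (w * x - t k) v) - v\<bar> \<le> max C 1
      * w powr (- \<theta>\<^sub>0) * \<bar>v\<bar>" if "W \<le> w" for w x v
  proof (cases "v = 0")
    case True
    then show ?thesis using chi2 unfolding kernel_chi2_def by simp
  next
    case False
    have "\<bar>(\<Sum>\<^sub>\<infinity>k. chi (w * x - t k) v) - v\<bar> = \<bar>v\<bar>
        * \<bar>(1 / v) * (\<Sum>\<^sub>\<infinity>k. chi (w * x - t k) v) - 1\<bar>"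
      using False by (simp add: abs_mult[symmetric] field_simps)
    also have "\<dots> \<le> \<bar>v\<bar> * (max C 1 * w powr (- \<theta>\<^sub>0))"
      using CW[OF that False, of x] mult_right_mono[OF max.cobounded1[of C 1], of "w powr (- \<theta>\<^sub>0)"]
      by (intro mult_left_mono) auto
    finally show ?thesis by (simp add: ac_simps)
  qed
  then show ?thesis using that[of "max C 1" W] by simp
qed

lemma sampling_intervals_overlap_AE:
  assumes samp: "sampling_sequence t \<delta> \<Delta>" and w: "0 < w"
  shows "AE u in lborel. (\<integral>\<^sup>+k. indicator {t k / w..t (k + 1) / w} u \<partial>count_space UNIV) \<le> (1::ennreal)"
proof -
  have "AE u in lborel. u \<notin> range (\<lambda>k. t k / w)"
    by (intro AE_not_in countable_imp_null_set_lborel) simp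
  then show ?thesis
  proof eventually_elim
    case (elim u)
    have unique: "k = j" if "u \<in> {t k / w..t (k + 1) / w}" "u \<in> {t j / w..t (j + 1) / w}" for k j
    proof (rule ccontr)
      assume "k \<noteq> j"
      then have "t (min k j + 1) / w \<le> t (max k j) / w"
        using sampling_sequence_mono[OF samp, of "min k j + 1" "max k j"] w
        by (intro divide_right_mono) auto
      then have "u = t (max k j) / w"
        using that by (cases "k \<le> j") (auto simp: min_def max_def)
      with elim show False by auto
    qed
    show ?case
    proof (cases "\<exists>j. u \<in> {t j / w..t (j + 1) / w}")
      case True
      then obtain j where j: "u \<in> {t j / w..t (j + 1) / w}" by blast
      have "(\<integral>\<^sup>+k. indicator {t k / w..t (k + 1) / w} u \<partial>count_space UNIV)
          = (\<Sum>k\<in>{j}. (indicator {t k / w..t (k + 1) / w} u :: ennreal))"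
        by (rule nn_integral_count_space') (use unique j in \<open>auto split: split_indicator\<close>)
      then show ?thesis by (simp split: split_indicator)
    next
      case False
      then have "(\<lambda>k. indicator {t k / w..t (k + 1) / w} u :: ennreal) = (\<lambda>_. 0)"
        by (auto split: split_indicator)
      then show ?thesis by simp
    qed
  qed
qed

lemma nn_integral_sampling_intervals_le:
  fixes G :: "real \<Rightarrow> ennreal"
  assumes samp: "sampling_sequence t \<delta> \<Delta>" and w: "0 < w" and [measurable]: "G \<in> borel_measurable borel"
  shows "(\<integral>\<^sup>+k. (\<integral>\<^sup>+u\<in>{t k / w..t (k + 1) / w}. G u \<partial>lborel)
      \<partial>count_space UNIV) \<le> (\<integral>\<^sup>+u. G u \<partial>lborel)"
proof -
  have "(\<integral>\<^sup>+k. (\<integral>\<^sup>+u\<in>{t k / w..t (k + 1) / w}. G u \<partial>lborel) \<partial>count_space UNIV)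
      = (\<integral>\<^sup>+u. (\<integral>\<^sup>+k. indicator {t k / w..t (k + 1) / w} u \<partial>count_space UNIV) * G u \<partial>lborel)"
    by (subst nn_integral_count_space_nn_integral[symmetric])
       (auto intro!: nn_integral_cong simp: nn_integral_cmult mult.commute)
  also have "\<dots> \<le> (\<integral>\<^sup>+u. G u \<partial>lborel)"
    using sampling_intervals_overlap_AE[OF samp w]
    by (intro nn_integral_mono_AE) (auto elim!: eventually_mono dest: mult_right_mono[of _ 1 "G _"])
  finally show ?thesis .
qed

section \<open>Modulars, Orlicz spaces and translations\<close>

lemma AE_lborel_affine_eq:
  fixes g h :: "real \<Rightarrow> 'a"
  assumes "AE y in lborel. g y = h y" "c \<noteq> 0"
  shows "AE y in lborel. g (b + c * y) = h (b + c * y)"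
proof -
  from assms(1) obtain N where N: "{y \<in> space lborel. g y \<noteq> h y} \<subseteq> N" "emeasure lborel N = 0" "N \<in> sets lborel"
    by (rule AE_E)
  have [measurable]: "N \<in> sets borel" using N(3) by simp
  have "AE y in lborel. y \<notin> N" using N by (intro AE_not_in) auto
  then have "AE y in lborel. b + c * y \<notin> N"
    by (rule AE_borel_affine[OF assms(2), rotated]) measurable
  then show ?thesis by eventually_elim (use N(1) in auto)
qed

lemma modular_lborel: "modular \<eta> g = (\<integral>\<^sup>+x. ennreal (\<eta> \<bar>g x\<bar>) \<partial>lborel)"
  unfolding modular_def by (simp add: nn_integral_completion)

lemma modular_cong_AE: "AE x in lborel. g x = h x \<Longrightarrow> modular \<phi> g = modular \<phi> h"
  unfolding modular_lborel by (intro nn_integral_cong_AE) (auto elim: eventually_mono)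

lemma modulus_cong_AE:
  assumes "AE x in lborel. f x = g x"
  shows "modulus \<eta> lam f d = modulus \<eta> lam g d"
  unfolding modulus_def
proof (intro SUP_cong refl modular_cong_AE)
  fix s
  have "AE x in lborel. f (s + 1 * x) = g (s + 1 * x)" by (rule AE_lborel_affine_eq[OF assms]) simp
  with assms show "AE x in lborel. lam * (f (x + s) - f x) = lam * (g (x + s) - g x)"
    by eventually_elim (simp add: add.commute)
qed

lemma orlicz_add_subset:
  assumes "\<And>u. 0 \<le> u \<Longrightarrow> 0 \<le> \<eta> u" "f \<in> orlicz (\<lambda>u. \<phi> u + \<eta> u)"
  shows "f \<in> orlicz \<phi>"
proof -
  obtain lam where lam: "lam > 0" "modular (\<lambda>u. \<phi> u + \<eta> u) (\<lambda>x. lam * f x) < \<infinity>"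
    using assms(2) unfolding orlicz_def by auto
  have "modular \<phi> (\<lambda>x. lam * f x) \<le> modular (\<lambda>u. \<phi> u + \<eta> u) (\<lambda>x. lam * f x)"
    unfolding modular_def using assms(1) by (intro nn_integral_mono ennreal_leI) auto
  then show ?thesis using assms(2) lam unfolding orlicz_def by (auto intro: le_less_trans)
qed

lemma orlicz_set_integrable:
  assumes phi: "phi_function \<phi>" "convex_on {0..} \<phi>"
    and f_borel[measurable]: "f \<in> borel_measurable borel" and f: "f \<in> orlicz \<phi>"
  shows "set_integrable lborel {a..b} f"
proof -
  note [measurable] = phi_function_measurable[OF phi(1)]
  obtain lam where lam: "lam > 0" "modular \<phi> (\<lambda>x. lam * f x) < \<infinity>"
    using f unfolding orlicz_def by auto
  have "(\<integral>\<^sup>+x. ennreal (\<phi> \<bar>lam * f x\<bar>) \<partial>lborel) < \<infinity>"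
    using lam(2) by (simp add: modular_def nn_integral_completion)
  then have "integrable lborel (\<lambda>x. \<phi> \<bar>lam * f x\<bar>)"
    using phi_function_nonneg[OF phi(1)] by (intro integrableI_nonneg) auto
  then have "integrable lborel (\<lambda>x. indicator {a..b} x / lam + \<phi> \<bar>lam * f x\<bar> / (lam * \<phi> 1))"
    by (intro Bochner_Integration.integrable_add integrable_divide integrable_real_indicator)
       (auto simp: emeasure_lborel_Icc_eq)
  then show ?thesis unfolding set_integrable_def
  proof (rule Bochner_Integration.integrable_bound)
    show "AE x in lborel. norm (indicator {a..b} x *\<^sub>R f x)
        \<le> norm (indicator {a..b} x / lam + \<phi> \<bar>lam * f x\<bar> / (lam * \<phi> 1))"
    proof (intro AE_I2)
      fix x
      have "\<bar>lam * f x\<bar> \<le> 1 + \<phi> \<bar>lam * f x\<bar> / \<phi> 1"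
        by (rule convex_phi_function_linear_lower_bound[OF phi]) simp
      then have "\<bar>f x\<bar> \<le> 1 / lam + \<phi> \<bar>lam * f x\<bar> / (lam * \<phi> 1)"
        using lam(1) phi_function_pos[OF phi(1), of 1] by (simp add: abs_mult field_simps)
      then show "norm (indicator {a..b} x *\<^sub>R f x)
          \<le> norm (indicator {a..b} x / lam + \<phi> \<bar>lam * f x\<bar> / (lam * \<phi> 1))"
        using lam(1) phi_function_pos[OF phi(1), of 1] phi_function_nonneg[OF phi(1), of "\<bar>lam * f x\<bar>"]
        by (auto split: split_indicator)
    qed
  qed measurable
qed

lemma orlicz_cong_AE:
  assumes "f \<in> orlicz \<phi>" "g \<in> borel_measurable borel" "AE x in lborel. f x = g x"
  shows "g \<in> orlicz \<phi>"
proof -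
  have "modular \<phi> (\<lambda>x. lam * f x) = modular \<phi> (\<lambda>x. lam * g x)" for lam
    using assms(3) by (intro modular_cong_AE) (auto elim: eventually_mono)
  moreover have "g \<in> borel_measurable lebesgue"
    using assms(2) by (intro measurable_completion) simp
  ultimately show ?thesis
    using assms(1) unfolding orlicz_def by auto
qed

lemma set_integrable_translate:
  fixes f :: "real \<Rightarrow> real"
  assumes "set_integrable lborel {a + c..b + c} f"
  shows "set_integrable lborel {a..b} (\<lambda>u. f (u + c))"
proof -
  have "integrable lborel (\<lambda>u. indicator {a + c..b + c} (c + 1 * u) *\<^sub>R f (c + 1 * u))"
    using assms unfolding set_integrable_def by (rule lborel_integrable_real_affine) simp
  then show ?thesis
    unfolding set_integrable_def by (simp add: indicator_def add.commute)
qed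

lemma nn_integral_interval_translate:
  fixes G :: "real \<Rightarrow> ennreal"
  assumes [measurable]: "G \<in> borel_measurable borel"
  shows "(\<integral>\<^sup>+u\<in>{a..b}. G (u - a) \<partial>lborel) = (\<integral>\<^sup>+s\<in>{0..b - a}. G s \<partial>lborel)"
  using nn_integral_real_affine[where c=1 and t=a, of "\<lambda>u. G (u - a) * indicator {a..b} u"]
  by (auto intro!: nn_integral_cong split: split_indicator)

lemma nn_integral_dilate:
  fixes g :: "real \<Rightarrow> real"
  assumes [measurable]: "g \<in> borel_measurable borel" and w: "0 < w"
  shows "(\<integral>\<^sup>+y. ennreal (g (w * y)) \<partial>lborel) = ennreal (1 / w) * (\<integral>\<^sup>+x. ennreal (g x) \<partial>lborel)"
  using nn_integral_real_affine[where c=w and t=0, of "\<lambda>x. ennreal (g x)"] w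
  by (simp add: mult.assoc[symmetric] flip: ennreal_mult)

lemma nn_integral_borel_representative:
  fixes L Lb :: "real \<Rightarrow> real"
  assumes L: "integrable lebesgue L" "\<And>x. 0 \<le> L x" and Lb[measurable]: "Lb \<in> borel_measurable borel"
    and ae: "AE x in lborel. L x = Lb x" and w: "0 < w" and A[measurable]: "A \<in> sets borel"
  shows "(\<integral>\<^sup>+y\<in>A. ennreal (Lb (w * y)) \<partial>lborel) = ennreal (LINT y:A|lebesgue. L (w * y))"
proof -
  have "AE y in lborel. L (0 + w * y) = Lb (0 + w * y)"
    using w by (intro AE_lborel_affine_eq[OF ae]) simp
  then have "AE y in lebesgue. ennreal (Lb (w * y)) * indicator A y = ennreal (indicator A y * L (w * y))"
    by (intro AE_completion) (auto elim!: eventually_mono split: split_indicator)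
  then have "(\<integral>\<^sup>+y. ennreal (Lb (w * y)) * indicator A y \<partial>lebesgue)
      = (\<integral>\<^sup>+y. ennreal (indicator A y * L (w * y)) \<partial>lebesgue)"
    by (rule nn_integral_cong_AE)
  then have eq: "(\<integral>\<^sup>+y\<in>A. ennreal (Lb (w * y)) \<partial>lborel)
      = (\<integral>\<^sup>+y. ennreal (indicator A y * L (w * y)) \<partial>lebesgue)"
    by (simp add: nn_integral_completion)
  have "(\<lambda>y. L (w *\<^sub>R y)) \<in> borel_measurable lebesgue"
    using L(1) by (intro measurable_compose[OF lebesgue_measurable_scaling]) auto
  then have meas: "(\<lambda>y. indicator A y * L (w * y)) \<in> borel_measurable lebesgue"
    by (intro borel_measurable_times borel_measurable_indicator) (auto intro: sets_completionI_sets)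
  have "(\<integral>\<^sup>+y\<in>A. ennreal (Lb (w * y)) \<partial>lborel) \<le> (\<integral>\<^sup>+y. ennreal (Lb (w * y)) \<partial>lborel)"
    by (intro nn_integral_mono) (simp split: split_indicator)
  also have "\<dots> = ennreal (1 / w) * (\<integral>\<^sup>+x. ennreal (L x) \<partial>lebesgue)"
  proof -
    have "(\<integral>\<^sup>+x. ennreal (Lb x) \<partial>lborel) = (\<integral>\<^sup>+x. ennreal (L x) \<partial>lborel)"
      using ae by (intro nn_integral_cong_AE) (auto elim: eventually_mono)
    then show ?thesis by (simp add: nn_integral_dilate[OF Lb w] nn_integral_completion)
  qed
  also have "\<dots> < \<infinity>"
    using L by (simp add: ennreal_mult_less_top integrable_iff_bounded)
  finally have "integrable lebesgue (\<lambda>y. indicator A y * L (w * y))"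
    unfolding eq using meas L(2) by (intro integrableI_nonneg AE_I2) auto
  then show ?thesis
    unfolding eq set_lebesgue_integral_def using L(2)
    by (subst nn_integral_eq_integral) (auto simp: mult.commute)
qed

lemma nn_integral_representative_eq_integral:
  fixes L Lb :: "real \<Rightarrow> real"
  assumes L: "integrable lebesgue L" "\<And>x. 0 \<le> L x" and ae: "AE x in lborel. L x = Lb x"
  shows "(\<integral>\<^sup>+x. ennreal (Lb x) \<partial>lborel) = ennreal (LINT x|lebesgue. L x)"
proof -
  have "(\<integral>\<^sup>+x. ennreal (Lb x) \<partial>lborel) = (\<integral>\<^sup>+x. ennreal (L x) \<partial>lborel)"
    using ae by (intro nn_integral_cong_AE) (auto elim: eventually_mono)
  also have "\<dots> = ennreal (LINT x|lebesgue. L x)"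
    using nn_integral_eq_integral[OF L(1)] L(2) by (simp add: nn_integral_completion)
  finally show ?thesis .
qed

lemma modular_translate_half_diff_le:
  assumes eta: "phi_function \<eta>" "convex_on {0..} \<eta>" and [measurable]: "f \<in> borel_measurable borel"
  shows "modular \<eta> (\<lambda>u. 1 / 2 * (f (u + y) - f u)) \<le> modular \<eta> f"
proof -
  note [measurable] = phi_function_measurable[OF eta(1)]
  have "ennreal (\<eta> \<bar>1 / 2 * (f (u + y) - f u)\<bar>) \<le> ennreal (1 / 2)
      * (ennreal (\<eta> \<bar>f (u + y)\<bar>) + ennreal (\<eta> \<bar>f u\<bar>))" for u
  proof -
    have "\<eta> \<bar>1 / 2 * (f (u + y) - f u)\<bar> \<le> \<eta> ((1 - 1 / 2) * \<bar>f (u + y)\<bar> + 1 / 2 * \<bar>f u\<bar>)"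
      by (rule phi_function_mono[OF eta(1)]) auto
    also have "\<dots> \<le> 1 / 2 * (\<eta> \<bar>f (u + y)\<bar> + \<eta> \<bar>f u\<bar>)"
      using convex_onD[OF eta(2), of "1 / 2" "\<bar>f (u + y)\<bar>" "\<bar>f u\<bar>"] by simp
    finally have "ennreal (\<eta> \<bar>1 / 2 * (f (u + y) - f u)\<bar>)
        \<le> ennreal (1 / 2 * (\<eta> \<bar>f (u + y)\<bar> + \<eta> \<bar>f u\<bar>))"
      by (rule ennreal_leI)
    also have "\<dots> = ennreal (1 / 2) * (ennreal (\<eta> \<bar>f (u + y)\<bar>) + ennreal (\<eta> \<bar>f u\<bar>))"
      using phi_function_nonneg[OF eta(1)] by (subst ennreal_mult') (auto intro!: ennreal_plus)
    finally show ?thesis .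
  qed
  then have "modular \<eta> (\<lambda>u. 1 / 2 * (f (u + y) - f u))
      \<le> ennreal (1 / 2) * ((\<integral>\<^sup>+u. ennreal (\<eta> \<bar>f (u + y)\<bar>) \<partial>lborel) + (\<integral>\<^sup>+u. ennreal (\<eta> \<bar>f u\<bar>) \<partial>lborel))"
    unfolding modular_lborel
    by (subst nn_integral_add[symmetric], measurable, subst nn_integral_cmult[symmetric], measurable)
       (rule nn_integral_mono)
  also have "(\<integral>\<^sup>+u. ennreal (\<eta> \<bar>f (u + y)\<bar>) \<partial>lborel)
      = (\<integral>\<^sup>+u. ennreal (\<eta> \<bar>f u\<bar>) \<partial>lborel)"
    using nn_integral_real_affine[where c=1 and t=y, of "\<lambda>u. ennreal (\<eta> \<bar>f u\<bar>)"] by (simp add: add.commute)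
  also have "ennreal (1 / 2)
      * ((\<integral>\<^sup>+u. ennreal (\<eta> \<bar>f u\<bar>) \<partial>lborel) + (\<integral>\<^sup>+u. ennreal (\<eta> \<bar>f u\<bar>) \<partial>lborel))
      = (ennreal (1 / 2) * ennreal 2) * modular \<eta> f"
    by (simp only: modular_lborel mult_2[symmetric] mult.assoc ennreal_numeral)
  also have "ennreal (1 / 2) * ennreal 2 = 1"
    by (subst ennreal_mult[symmetric]) auto
  finally show ?thesis by simp
qed

lemma nn_integral_modulus_le:
  assumes eta: "phi_function \<eta>" and [measurable]: "f \<in> borel_measurable borel" and D: "0 \<le> D"
  shows "(\<integral>\<^sup>+x.
      (\<integral>\<^sup>+s\<in>{0..D}. ennreal (\<eta> \<bar>lam * (f (x + s) - f x)\<bar>) \<partial>lborel) \<partial>lborel)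
    \<le> ennreal D * modulus \<eta> lam f D"
proof -
  note [measurable] = phi_function_measurable[OF eta]
  have "(\<integral>\<^sup>+x.
      (\<integral>\<^sup>+s\<in>{0..D}. ennreal (\<eta> \<bar>lam * (f (x + s) - f x)\<bar>) \<partial>lborel) \<partial>lborel)
      = (\<integral>\<^sup>+s\<in>{0..D}. modular \<eta> (\<lambda>x. lam * (f (x + s) - f x)) \<partial>lborel)"
    unfolding modular_lborel
    by (subst lborel_pair.Fubini') (measurable, simp add: nn_integral_multc)
  also have "\<dots> \<le> (\<integral>\<^sup>+s\<in>{0..D}. modulus \<eta> lam f D \<partial>lborel)"
    unfolding modulus_def by (intro nn_integral_mono) (auto intro: SUP_upper split: split_indicator)
  also have "\<dots> = ennreal D * modulus \<eta> lam f D"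
    using D by (simp add: nn_integral_cmult_indicator mult.commute)
  finally show ?thesis .
qed

section \<open>Interval means and Jensen's inequality\<close>

definition interval_mean :: "(real \<Rightarrow> real) \<Rightarrow> real \<Rightarrow> real \<Rightarrow> real" where
  "interval_mean h a b = (LINT u:{a..b}|lebesgue. h u) / (b - a)"

lemma sampling_kantorovich_interval_mean:
  "sampling_kantorovich t chi w f x
     = (\<Sum>\<^sub>\<infinity>k. chi (w * x - t k) (interval_mean f (t k / w) (t (k + 1) / w)))"
  unfolding sampling_kantorovich_def interval_mean_def
  by (simp add: diff_divide_distrib[symmetric] mult.commute)

lemma sampling_kantorovich_cong_AE:
  assumes "f \<in> borel_measurable lebesgue" "g \<in> borel_measurable borel" "AE x in lborel. f x = g x"
  shows "sampling_kantorovich t chi w f x = sampling_kantorovich t chi w g x"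
proof -
  have "(LINT u:A|lebesgue. f u) = (LINT u:A|lebesgue. g u)" if "A \<in> sets borel" for A
  proof -
    have "A \<in> sets lebesgue" using that by (intro sets_completionI_sets) simp
    moreover have "g \<in> borel_measurable lebesgue" using assms(2) by (intro measurable_completion) simp
    moreover have "AE u in lebesgue. indicator A u *\<^sub>R f u = indicator A u *\<^sub>R g u"
      using assms(3) by (intro AE_completion) (auto elim: eventually_mono)
    ultimately show ?thesis
      unfolding set_lebesgue_integral_def using assms(1) by (intro integral_cong_AE) auto
  qed
  then show ?thesis unfolding sampling_kantorovich_def by simp
qed

lemma interval_mean_lborel:
  assumes "h \<in> borel_measurable borel"
  shows "interval_mean h a b = (LINT u:{a..b}|lborel. h u) / (b - a)"
  unfolding interval_mean_def set_lebesgue_integral_def using assms by (simp add: integral_completion)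

lemma interval_mean_diff:
  assumes "h \<in> borel_measurable borel" "g \<in> borel_measurable borel"
    and "set_integrable lborel {a..b} h" "set_integrable lborel {a..b} g"
  shows "interval_mean (\<lambda>u. h u - g u) a b = interval_mean h a b - interval_mean g a b"
  using assms by (simp add: interval_mean_lborel set_integral_diff diff_divide_distrib)

lemma interval_mean_cmult: "interval_mean (\<lambda>u. c * h u) a b = c * interval_mean h a b"
  unfolding interval_mean_def by (simp add: set_integral_mult_right)

lemma interval_mean_const: "a < b \<Longrightarrow> interval_mean (\<lambda>_. c) a b = c"
  unfolding interval_mean_def by (simp add: set_integral_const)

lemma uniform_measure_interval:
  fixes a b :: real
  assumes "a < b"
  shows "uniform_measure lborel {a..b} = density lborel (\<lambda>u. ennreal (indicator {a..b} u / (b - a)))"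
proof -
  have "(\<lambda>u. indicator {a..b} u / emeasure lborel {a..b}) = (\<lambda>u. ennreal (indicator {a..b} u / (b - a)))"
    using assms divide_ennreal[of 1 "b - a"] by (auto simp: fun_eq_iff split: split_indicator)
  then show ?thesis unfolding uniform_measure_def by simp
qed

lemma
  fixes g :: "real \<Rightarrow> real"
  assumes ab: "a < b" and [measurable]: "g \<in> borel_measurable borel"
  shows integrable_uniform_measure_interval:
      "set_integrable lborel {a..b} g \<Longrightarrow> integrable (uniform_measure lborel {a..b}) g"
    and integral_uniform_measure_interval:
      "integral\<^sup>L (uniform_measure lborel {a..b}) g = (LINT u:{a..b}|lborel. g u) / (b - a)"
proof -
  have density_eq: "(\<lambda>u. (indicator {a..b} u / (b - a)) *\<^sub>R g u) = (\<lambda>u. 1 / (b - a) * (indicator {a..b} u *\<^sub>R g u))"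
    by auto
  have "integrable (uniform_measure lborel {a..b}) g
      \<longleftrightarrow> integrable lborel (\<lambda>u. (indicator {a..b} u / (b - a)) *\<^sub>R g u)"
    unfolding uniform_measure_interval[OF ab] by (rule integrable_density) (measurable, use ab in auto)
  then show "set_integrable lborel {a..b} g \<Longrightarrow> integrable (uniform_measure lborel {a..b}) g"
    using ab by (simp add: density_eq set_integrable_def)
  have "integral\<^sup>L (uniform_measure lborel {a..b}) g = (LINT u|lborel. (indicator {a..b} u / (b - a)) *\<^sub>R g u)"
    unfolding uniform_measure_interval[OF ab] by (rule integral_density) (measurable, use ab in auto)
  then show "integral\<^sup>L (uniform_measure lborel {a..b}) g = (LINT u:{a..b}|lborel. g u) / (b - a)"
    by (simp add: density_eq set_lebesgue_integral_def)
qed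

lemma interval_mean_jensen:
  assumes eta: "phi_function \<eta>" "convex_on {0..} \<eta>" and ab: "a < b"
    and h[measurable]: "h \<in> borel_measurable borel" and h_int: "set_integrable lborel {a..b} h"
  shows "ennreal (\<eta> \<bar>interval_mean h a b\<bar>)
     \<le> ennreal (1 / (b - a)) * (\<integral>\<^sup>+u\<in>{a..b}. ennreal (\<eta> \<bar>h u\<bar>) \<partial>lborel)"
proof (cases "(\<integral>\<^sup>+u\<in>{a..b}. ennreal (\<eta> \<bar>h u\<bar>) \<partial>lborel) = \<infinity>")
  case True
  then show ?thesis using ab by (simp add: ennreal_mult_top)
next
  case False
  note [measurable] = phi_function_measurable[OF eta(1)]
  interpret U: prob_space "uniform_measure lborel {a..b}"
    using ab by (intro prob_space_uniform_measure) auto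
  note U_integrable = integrable_uniform_measure_interval[OF ab]
  note U_expectation = integral_uniform_measure_interval[OF ab]
  have "integrable lborel (\<lambda>u. \<eta> \<bar>h u\<bar> * indicator {a..b} u)"
    using False phi_function_nonneg[OF eta(1)]
    by (intro integrableI_nonneg) (auto simp: top.not_eq_extremum nn_integral_set_ennreal)
  then have eta_h_int: "set_integrable lborel {a..b} (\<lambda>u. \<eta> \<bar>h u\<bar>)"
    by (simp add: set_integrable_def mult.commute)
  define q where "q v = \<eta> (max v 0)" for v
  have "\<bar>interval_mean h a b\<bar> \<le> (LINT u:{a..b}|lborel. \<bar>h u\<bar>) / (b - a)"
    using set_integral_norm_bound[OF h_int] ab by (simp add: interval_mean_lborel divide_right_mono)
  then have "\<eta> \<bar>interval_mean h a b\<bar> \<le> \<eta> (U.expectation (\<lambda>u. \<bar>h u\<bar>))"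
    by (simp add: U_expectation phi_function_mono[OF eta(1)])
  also have "\<dots> = q (U.expectation (\<lambda>u. \<bar>h u\<bar>))"
    by (simp add: q_def Bochner_Integration.integral_nonneg)
  also have "\<dots> \<le> U.expectation (\<lambda>u. q \<bar>h u\<bar>)"
    using convex_phi_function_extension[OF eta] U_integrable[OF _ set_integrable_abs[OF h_int]]
      U_integrable[OF _ eta_h_int]
    by (intro U.jensens_inequality[where I=UNIV]) (auto simp: q_def)
  also have "\<dots> = 1 / (b - a) * (LINT u:{a..b}|lborel. \<eta> \<bar>h u\<bar>)"
    by (simp add: U_expectation q_def)
  finally have "ennreal (\<eta> \<bar>interval_mean h a b\<bar>) \<le> ennreal (1 / (b - a) * (LINT u:{a..b}|lborel. \<eta> \<bar>h u\<bar>))"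
    by (rule ennreal_leI)
  also have "\<dots> = ennreal (1 / (b - a)) * ennreal (LINT u:{a..b}|lborel. \<eta> \<bar>h u\<bar>)"
    by (rule ennreal_mult') (use ab in simp)
  also have "ennreal (LINT u:{a..b}|lborel. \<eta> \<bar>h u\<bar>)
      = (\<integral>\<^sup>+u. ennreal (indicator {a..b} u *\<^sub>R \<eta> \<bar>h u\<bar>) \<partial>lborel)"
    unfolding set_lebesgue_integral_def
    by (rule nn_integral_eq_integral[symmetric])
       (use eta_h_int phi_function_nonneg[OF eta(1)] in \<open>auto simp: set_integrable_def\<close>)
  also have "\<dots> = (\<integral>\<^sup>+u\<in>{a..b}. ennreal (\<eta> \<bar>h u\<bar>) \<partial>lborel)"
    by (intro nn_integral_cong) (simp split: split_indicator)
  finally show ?thesis .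
qed

lemma interval_mean_translate_diff_jensen:
  fixes f :: "real \<Rightarrow> real"
  assumes eta: "phi_function \<eta>" "convex_on {0..} \<eta>" and ab: "a < b"
    and f[measurable]: "f \<in> borel_measurable borel" and f_int: "\<And>a b. set_integrable lborel {a..b} f"
  shows "ennreal (\<eta> \<bar>lam * (interval_mean f a b - interval_mean (\<lambda>u. f (x + u - a)) a b)\<bar>)
    \<le> ennreal (1 / (b - a)) * (\<integral>\<^sup>+u\<in>{a..b}. ennreal (\<eta> \<bar>lam * (f u - f (x + u - a))\<bar>) \<partial>lborel)"
proof -
  have "set_integrable lborel {a..b} (\<lambda>u. f (u + (x - a)))"
    by (rule set_integrable_translate[OF f_int])
  then have "lam * (interval_mean f a b - interval_mean (\<lambda>u. f (x + u - a)) a b)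
      = interval_mean (\<lambda>u. lam * (f u - f (x + u - a))) a b"
    using f_int by (simp add: interval_mean_cmult interval_mean_diff algebra_simps)
  moreover have "set_integrable lborel {a..b} (\<lambda>u. lam * (f u - f (x + u - a)))"
    using f_int \<open>set_integrable lborel {a..b} (\<lambda>u. f (u + (x - a)))\<close>
    by (simp add: algebra_simps)
  ultimately show ?thesis
    using interval_mean_jensen[OF eta ab] by simp
qed

lemma interval_mean_translate_const_jensen:
  fixes f :: "real \<Rightarrow> real"
  assumes eta: "phi_function \<eta>" "convex_on {0..} \<eta>" and ab: "a < b" "b - a \<le> D"
    and f[measurable]: "f \<in> borel_measurable borel" and f_int: "\<And>a b. set_integrable lborel {a..b} f"
  shows "ennreal (\<eta> \<bar>lam * (interval_mean (\<lambda>u. f (x + u - a)) a b - f x)\<bar>)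
    \<le> ennreal (1 / (b - a)) * (\<integral>\<^sup>+s\<in>{0..D}. ennreal (\<eta> \<bar>lam * (f (x + s) - f x)\<bar>) \<partial>lborel)"
proof -
  note [measurable] = phi_function_measurable[OF eta(1)]
  have shifted: "set_integrable lborel {a..b} (\<lambda>u. f (u + (x - a)))"
    by (rule set_integrable_translate[OF f_int])
  have const: "set_integrable lborel {a..b} (\<lambda>_. f x)"
    unfolding set_integrable_def using ab by (intro integrable_scaleR_left integrable_real_indicator) auto
  have "lam * (interval_mean (\<lambda>u. f (x + u - a)) a b - f x)
      = interval_mean (\<lambda>u. lam * (f (x + u - a) - f x)) a b"
    using shifted const ab
    by (simp add: interval_mean_cmult interval_mean_diff interval_mean_const algebra_simps)
  moreover have "set_integrable lborel {a..b} (\<lambda>u. lam * (f (x + u - a) - f x))"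
    using shifted const by (simp add: algebra_simps)
  ultimately have "ennreal (\<eta> \<bar>lam * (interval_mean (\<lambda>u. f (x + u - a)) a b - f x)\<bar>)
      \<le> ennreal (1 / (b - a)) * (\<integral>\<^sup>+u\<in>{a..b}. ennreal (\<eta> \<bar>lam * (f (x + u - a) - f x)\<bar>) \<partial>lborel)"
    using interval_mean_jensen[OF eta ab(1), of "\<lambda>u. lam * (f (x + u - a) - f x)"] by simp
  also have "\<dots> = ennreal (1 / (b - a))
      * (\<integral>\<^sup>+s\<in>{0..b - a}. ennreal (\<eta> \<bar>lam * (f (x + s) - f x)\<bar>) \<partial>lborel)"
    using nn_integral_interval_translate[of "\<lambda>s. ennreal (\<eta> \<bar>lam * (f (x + s) - f x)\<bar>)" a b]
    by (simp add: add_diff_eq)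
  also have "\<dots> \<le> ennreal (1 / (b - a))
      * (\<integral>\<^sup>+s\<in>{0..D}. ennreal (\<eta> \<bar>lam * (f (x + s) - f x)\<bar>) \<partial>lborel)"
    using ab by (intro mult_left_mono nn_integral_mono) (auto split: split_indicator)
  finally show ?thesis .
qed

section \<open>The pointwise estimate\<close>

text \<open>Jensen's inequality for the weights \<open>l k / m\<close>, followed by a growth condition of type (H).\<close>
lemma phi_weighted_infsum_le:
  assumes phi: "phi_function \<phi>" "convex_on {0..} \<phi>" and psi: "phi_function \<psi>"
    and Lnn: "\<And>k. 0 \<le> l k" and sum_l: "\<And>F. finite F \<Longrightarrow> sum l F \<le> m" and m: "0 < m"
    and c: "0 < c" and H: "\<And>v. 0 \<le> v \<Longrightarrow> \<phi> (c * m * \<psi> v) \<le> E v"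
    and a: "\<And>k. 0 \<le> a k" and I: "\<And>F. finite F \<Longrightarrow> (\<Sum>k\<in>F. l k * E (a k)) \<le> I"
  shows "(\<lambda>k. l k * \<psi> (a k)) summable_on UNIV"
    "\<phi> (c * (\<Sum>\<^sub>\<infinity>k. l k * \<psi> (a k))) \<le> I / m"
proof -
  have psi_a: "0 \<le> \<psi> (a k)" for k using phi_function_nonneg[OF psi a] .
  have bound: "\<phi> (\<Sum>k\<in>F. c * (l k * \<psi> (a k))) \<le> I / m" if F: "finite F" for F
  proof -
    have "\<phi> (\<Sum>k\<in>F. c * (l k * \<psi> (a k))) = \<phi> (\<Sum>k\<in>F. l k * (c * \<psi> (a k)))"
      by (simp add: algebra_simps)
    also have "\<dots> \<le> (\<Sum>k\<in>F. l k / m * \<phi> (m * (c * \<psi> (a k))))"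
      by (rule convex_on_weighted_sum_le[OF phi(2) phi_function_0[OF phi(1)] F _ sum_l[OF F] m])
         (use Lnn c psi_a in auto)
    also have "\<dots> \<le> (\<Sum>k\<in>F. l k / m * E (a k))"
      using H[OF a] Lnn m by (intro sum_mono mult_left_mono) (auto simp: ac_simps)
    also have "\<dots> \<le> I / m"
      using I[OF F] m by (simp add: sum_divide_distrib[symmetric] divide_right_mono)
    finally show ?thesis .
  qed
  have "0 \<le> c * (l k * \<psi> (a k))" for k using c Lnn psi_a by simp
  note scaled = phi_function_infsum_le[OF phi(1) this bound]
  then show "(\<lambda>k. l k * \<psi> (a k)) summable_on UNIV"
    using summable_on_cmult_right[OF scaled(1), of "1 / c"] c by simp
  then show "\<phi> (c * (\<Sum>\<^sub>\<infinity>k. l k * \<psi> (a k))) \<le> I / m"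
    using scaled(2) by (simp add: infsum_cmult_right')
qed

text \<open>The three-term splitting behind the estimate: \<open>\<chi>(z\<^sub>k, V\<^sub>k) - \<chi>(z\<^sub>k, c)\<close> is controlled through
  an intermediate value \<open>V'\<^sub>k\<close>, and the remaining error is that of the kernel at the constant \<open>c\<close>.\<close>
lemma kernel_sum_convex_estimate_real:
  fixes chi :: "real \<Rightarrow> real \<Rightarrow> real" and z V V' :: "int \<Rightarrow> real"
  assumes phi: "phi_function \<phi>" "convex_on {0..} \<phi>" and psi: "phi_function \<psi>"
    and lip: "\<And>x u v. \<bar>chi x u - chi x v\<bar> \<le> L x * \<psi> \<bar>u - v\<bar>" and Lnn: "\<And>x. 0 \<le> L x"
    and sum_L: "\<And>F. finite F \<Longrightarrow> (\<Sum>k\<in>F. L (z k)) \<le> m" and m: "0 < m"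
    and mu: "0 < \<mu>" and H: "\<And>v. 0 \<le> v \<Longrightarrow> \<phi> (3 * \<mu> * m * \<psi> v) \<le> E v"
    and I1: "\<And>F. finite F \<Longrightarrow> (\<Sum>k\<in>F. L (z k) * E \<bar>V k - V' k\<bar>) \<le> I\<^sub>1"
    and I2: "\<And>F. finite F \<Longrightarrow> (\<Sum>k\<in>F. L (z k) * E \<bar>V' k - c\<bar>) \<le> I\<^sub>2"
    and summable_c: "(\<lambda>k. chi (z k) c) summable_on UNIV"
    and error_c: "\<bar>(\<Sum>\<^sub>\<infinity>k. chi (z k) c) - c\<bar> \<le> R"
  shows "\<phi> (\<mu> * \<bar>(\<Sum>\<^sub>\<infinity>k. chi (z k) (V k)) - c\<bar>)
      \<le> (I\<^sub>1 / m + I\<^sub>2 / m + \<phi> (3 * \<mu> * R)) / 3"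
proof -
  define S1 where "S1 = (\<Sum>\<^sub>\<infinity>k. L (z k) * \<psi> \<bar>V k - V' k\<bar>)"
  define S2 where "S2 = (\<Sum>\<^sub>\<infinity>k. L (z k) * \<psi> \<bar>V' k - c\<bar>)"
  have S: "0 \<le> S1" "0 \<le> S2"
    using Lnn phi_function_nonneg[OF psi] by (auto simp: S1_def S2_def intro!: infsum_nonneg)
  have mu3: "0 < 3 * \<mu>" using mu by simp
  note weighted = phi_weighted_infsum_le[where l = "\<lambda>k. L (z k)", OF phi psi Lnn sum_L m mu3 H]
  have est1: "(\<lambda>k. L (z k) * \<psi> \<bar>V k - V' k\<bar>) summable_on UNIV" "\<phi> (3 * \<mu> * S1) \<le> I\<^sub>1 / m"
    using weighted[of "\<lambda>k. \<bar>V k - V' k\<bar>" I\<^sub>1] I1 by (simp_all add: S1_def)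
  have est2: "(\<lambda>k. L (z k) * \<psi> \<bar>V' k - c\<bar>) summable_on UNIV" "\<phi> (3 * \<mu> * S2) \<le> I\<^sub>2 / m"
    using weighted[of "\<lambda>k. \<bar>V' k - c\<bar>" I\<^sub>2] I2 by (simp_all add: S2_def)
  have "\<bar>chi (z k) (V k) - chi (z k) c\<bar> \<le> L (z k) * \<psi> \<bar>V k - V' k\<bar> + L (z k) * \<psi> \<bar>V' k - c\<bar>" for k
    using lip[of "z k" "V k" "V' k"] lip[of "z k" "V' k" c] by linarith
  then have "\<bar>(\<Sum>\<^sub>\<infinity>k. chi (z k) (V k)) - (\<Sum>\<^sub>\<infinity>k. chi (z k) c)\<bar> \<le> S1 + S2"
    using infsum_abs_diff_le(2)[OF summable_c summable_on_add[OF est1(1) est2(1)]]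
    by (simp add: S1_def S2_def infsum_add[OF est1(1) est2(1)])
  then have "\<mu> * \<bar>(\<Sum>\<^sub>\<infinity>k. chi (z k) (V k)) - c\<bar> \<le> \<mu> * (S1 + S2 + R)"
    using error_c mu by (intro mult_left_mono) auto
  also have "\<dots> = (3 * \<mu> * S1 + 3 * \<mu> * S2 + 3 * \<mu> * R) / 3"
    by (simp add: algebra_simps)
  finally have "\<phi> (\<mu> * \<bar>(\<Sum>\<^sub>\<infinity>k. chi (z k) (V k)) - c\<bar>)
      \<le> \<phi> ((3 * \<mu> * S1 + 3 * \<mu> * S2 + 3 * \<mu> * R) / 3)"
    using mu by (intro phi_function_mono[OF phi(1)]) auto
  also have "\<dots> \<le> (\<phi> (3 * \<mu> * S1) + \<phi> (3 * \<mu> * S2) + \<phi> (3 * \<mu> * R)) / 3"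
    using S error_c mu by (intro convex_on_mean3[OF phi(2)]) auto
  also have "\<dots> \<le> (I\<^sub>1 / m + I\<^sub>2 / m + \<phi> (3 * \<mu> * R)) / 3"
    using est1(2) est2(2) by (intro divide_right_mono add_mono) auto
  finally show ?thesis .
qed

lemma kernel_sum_convex_estimate:
  fixes chi :: "real \<Rightarrow> real \<Rightarrow> real" and z V V' :: "int \<Rightarrow> real"
  assumes phi: "phi_function \<phi>" "convex_on {0..} \<phi>" and psi: "phi_function \<psi>"
    and lip: "\<And>x u v. \<bar>chi x u - chi x v\<bar> \<le> L x * \<psi> \<bar>u - v\<bar>" and Lnn: "\<And>x. 0 \<le> L x"
    and sum_L: "\<And>F. finite F \<Longrightarrow> (\<Sum>k\<in>F. L (z k)) \<le> m" and m: "0 < m"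
    and mu: "0 < \<mu>" and H: "\<And>v. 0 \<le> v \<Longrightarrow> \<phi> (3 * \<mu> * m * \<psi> v) \<le> E v"
    and E: "\<And>v. 0 \<le> v \<Longrightarrow> 0 \<le> E v"
    and summable_c: "(\<lambda>k. chi (z k) c) summable_on UNIV"
    and error_c: "\<bar>(\<Sum>\<^sub>\<infinity>k. chi (z k) c) - c\<bar> \<le> R"
  shows "ennreal (\<phi> (\<mu> * \<bar>(\<Sum>\<^sub>\<infinity>k. chi (z k) (V k)) - c\<bar>))
    \<le> ennreal (1 / 3) * (ennreal (1 / m) * nn_sum (\<lambda>k. L (z k) * E \<bar>V k - V' k\<bar>)
        + ennreal (1 / m) * nn_sum (\<lambda>k. L (z k) * E \<bar>V' k - c\<bar>)
        + ennreal (\<phi> (3 * \<mu> * R)))"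
proof (cases "nn_sum (\<lambda>k. L (z k) * E \<bar>V k - V' k\<bar>) < \<infinity>
    \<and> nn_sum (\<lambda>k. L (z k) * E \<bar>V' k - c\<bar>) < \<infinity>")
  case False
  then have "nn_sum (\<lambda>k. L (z k) * E \<bar>V k - V' k\<bar>) = \<infinity>
      \<or> nn_sum (\<lambda>k. L (z k) * E \<bar>V' k - c\<bar>) = \<infinity>"
    by (simp add: less_top[symmetric])
  then show ?thesis using m by (auto simp: ennreal_mult_top)
next
  case True
  define I1 where "I1 = (\<Sum>\<^sub>\<infinity>k. L (z k) * E \<bar>V k - V' k\<bar>)"
  define I2 where "I2 = (\<Sum>\<^sub>\<infinity>k. L (z k) * E \<bar>V' k - c\<bar>)"
  have nn: "0 \<le> L (z k) * E \<bar>V k - V' k\<bar>" "0 \<le> L (z k) * E \<bar>V' k - c\<bar>" for k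
    using Lnn E by auto
  have "\<phi> (\<mu> * \<bar>(\<Sum>\<^sub>\<infinity>k. chi (z k) (V k)) - c\<bar>) \<le> (I1 / m + I2 / m + \<phi> (3 * \<mu> * R)) / 3"
    using nn_sum_finite_sums_le[OF nn(1)] nn_sum_finite_sums_le[OF nn(2)] True
    by (intro kernel_sum_convex_estimate_real[OF phi psi lip Lnn sum_L m mu H _ _ summable_c error_c])
       (auto simp: I1_def I2_def)
  then show ?thesis
    using True nn m phi_function_nonneg[OF phi(1), of "3 * \<mu> * R"] error_c mu
    by (simp add: nn_sum_eq_infsum nn_sum_finite_imp_summable I1_def I2_def ennreal_leI infsum_nonneg
        flip: ennreal_mult' ennreal_plus)
qed

text \<open>The bound for the first sum after Jensen's inequality on the sampling intervals. The mean of
  \<open>u \<mapsto> f (x + u - t k / w)\<close> over the \<open>k\<close>-th interval is the mean of \<open>f\<close> over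
  \<open>[x, x + (t (k + 1) - t k) / w]\<close>.\<close>
definition kernel_mean_deviation ::
  "(int \<Rightarrow> real) \<Rightarrow> (real \<Rightarrow> real) \<Rightarrow> (real \<Rightarrow> real) \<Rightarrow> real
    \<Rightarrow> (real \<Rightarrow> real) \<Rightarrow> real \<Rightarrow> ennreal" where
  "kernel_mean_deviation t L G w f x = (\<integral>\<^sup>+k. ennreal (L (w * x - t k))
      * (ennreal (w / (t (k + 1) - t k))
        * (\<integral>\<^sup>+u\<in>{t k / w..t (k + 1) / w}. ennreal (G (f u - f (x + u - t k / w))) \<partial>lborel))
      \<partial>count_space UNIV)"

lemma nn_sum_kernel_mean_deviation_le:
  fixes f :: "real \<Rightarrow> real"
  assumes eta: "phi_function \<eta>" "convex_on {0..} \<eta>" and samp: "sampling_sequence t \<delta> \<Delta>"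
    and Lnn: "\<And>x. 0 \<le> L x" and w: "0 < w"
    and f[measurable]: "f \<in> borel_measurable borel" and f_int: "\<And>a b. set_integrable lborel {a..b} f"
  shows "nn_sum (\<lambda>k. L (w * x - t k) * \<eta> \<bar>lam * \<bar>interval_mean f (t k / w) (t (k + 1) / w)
      - interval_mean (\<lambda>u. f (x + u - t k / w)) (t k / w) (t (k + 1) / w)\<bar>\<bar>)
    \<le> kernel_mean_deviation t L (\<lambda>v. \<eta> \<bar>lam * v\<bar>) w f x"
  unfolding nn_sum_def kernel_mean_deviation_def
proof (intro nn_integral_mono)
  fix k
  note I = sampling_interval_length[OF samp w, of k]
  show "ennreal (L (w * x - t k) * \<eta> \<bar>lam * \<bar>interval_mean f (t k / w) (t (k + 1) / w)
        - interval_mean (\<lambda>u. f (x + u - t k / w)) (t k / w) (t (k + 1) / w)\<bar>\<bar>)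
      \<le> ennreal (L (w * x - t k)) * (ennreal (w / (t (k + 1) - t k))
        * (\<integral>\<^sup>+u\<in>{t k / w..t (k + 1) / w}. ennreal (\<eta> \<bar>lam * (f u - f (x + u - t k / w))\<bar>) \<partial>lborel))"
    using interval_mean_translate_diff_jensen[OF eta I(1) f f_int, where lam = lam and x = x] Lnn
      phi_function_nonneg[OF eta(1)]
    by (auto simp: abs_mult I(2) ennreal_mult intro!: mult_left_mono)
qed

lemma nn_sum_kernel_translate_mean_le:
  fixes f :: "real \<Rightarrow> real"
  assumes eta: "phi_function \<eta>" "convex_on {0..} \<eta>" and samp: "sampling_sequence t \<delta> \<Delta>"
    and Lnn: "\<And>x. 0 \<le> L x" and sum_L: "\<And>F. finite F \<Longrightarrow> (\<Sum>k\<in>F. L (w * x - t k)) \<le> m"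
    and m: "0 < m" and w: "0 < w"
    and f[measurable]: "f \<in> borel_measurable borel" and f_int: "\<And>a b. set_integrable lborel {a..b} f"
  shows "ennreal (1 / m) * nn_sum (\<lambda>k. L (w * x - t k)
      * \<eta> \<bar>lam * \<bar>interval_mean (\<lambda>u. f (x + u - t k / w)) (t k / w) (t (k + 1) / w) - f x\<bar>\<bar>)
    \<le> ennreal (w / \<delta>) * (\<integral>\<^sup>+s\<in>{0..\<Delta> / w}. ennreal (\<eta> \<bar>lam * (f (x + s) - f x)\<bar>) \<partial>lborel)"
proof -
  define K where "K = (\<integral>\<^sup>+s\<in>{0..\<Delta> / w}. ennreal (\<eta> \<bar>lam * (f (x + s) - f x)\<bar>) \<partial>lborel)"
  have "nn_sum (\<lambda>k. L (w * x - t k)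
      * \<eta> \<bar>lam * \<bar>interval_mean (\<lambda>u. f (x + u - t k / w)) (t k / w) (t (k + 1) / w) - f x\<bar>\<bar>)
      \<le> (\<integral>\<^sup>+k. ennreal (L (w * x - t k)) * (ennreal (w / \<delta>) * K) \<partial>count_space UNIV)"
    unfolding nn_sum_def
  proof (intro nn_integral_mono)
    fix k
    note I = sampling_interval_length[OF samp w, of k]
    have "ennreal (\<eta> \<bar>lam * (interval_mean (\<lambda>u. f (x + u - t k / w)) (t k / w) (t (k + 1) / w) - f x)\<bar>)
        \<le> ennreal (w / (t (k + 1) - t k)) * K"
      using interval_mean_translate_const_jensen[OF eta I(1) I(3) f f_int, where lam = lam and x = x]
      by (simp add: K_def I(2))
    also have "\<dots> \<le> ennreal (w / \<delta>) * K"
      using I(4) by (intro mult_right_mono ennreal_leI) auto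
    finally show "ennreal (L (w * x - t k)
        * \<eta> \<bar>lam * \<bar>interval_mean (\<lambda>u. f (x + u - t k / w)) (t k / w) (t (k + 1) / w) - f x\<bar>\<bar>)
        \<le> ennreal (L (w * x - t k)) * (ennreal (w / \<delta>) * K)"
      using Lnn phi_function_nonneg[OF eta(1)] by (simp add: abs_mult ennreal_mult mult_left_mono)
  qed
  also have "\<dots> = nn_sum (\<lambda>k. L (w * x - t k)) * (ennreal (w / \<delta>) * K)"
    unfolding nn_sum_def by (rule nn_integral_multc) simp
  also have "\<dots> \<le> ennreal m * (ennreal (w / \<delta>) * K)"
    by (intro mult_right_mono nn_sum_le) (use Lnn sum_L in auto)
  finally have "ennreal (1 / m) * nn_sum (\<lambda>k. L (w * x - t k)
      * \<eta> \<bar>lam * \<bar>interval_mean (\<lambda>u. f (x + u - t k / w)) (t k / w) (t (k + 1) / w) - f x\<bar>\<bar>)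
      \<le> (ennreal (1 / m) * ennreal m) * (ennreal (w / \<delta>) * K)"
    by (simp add: mult.assoc mult_left_mono)
  then show ?thesis using m by (simp add: K_def flip: ennreal_mult)
qed

lemma sampling_kantorovich_pointwise_estimate:
  fixes f :: "real \<Rightarrow> real"
  assumes phi: "phi_function \<phi>" "convex_on {0..} \<phi>" and psi: "phi_function \<psi>"
    and eta: "phi_function \<eta>" "convex_on {0..} \<eta>" and samp: "sampling_sequence t \<delta> \<Delta>"
    and lip: "\<And>x u v. \<bar>chi x u - chi x v\<bar> \<le> L x * \<psi> \<bar>u - v\<bar>" and Lnn: "\<And>x. 0 \<le> L x"
    and sum_L: "\<And>F. finite F \<Longrightarrow> (\<Sum>k\<in>F. L (w * x - t k)) \<le> m" and m: "0 < m" and w: "0 < w"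
    and f[measurable]: "f \<in> borel_measurable borel" and f_int: "\<And>a b. set_integrable lborel {a..b} f"
    and mu: "0 < \<mu>" and H: "\<And>v. 0 \<le> v \<Longrightarrow> \<phi> (3 * \<mu> * m * \<psi> v) \<le> \<eta> \<bar>lam * v\<bar>"
    and summable_f: "(\<lambda>k. chi (w * x - t k) (f x)) summable_on UNIV"
    and error_f: "\<bar>(\<Sum>\<^sub>\<infinity>k. chi (w * x - t k) (f x)) - f x\<bar> \<le> R"
  shows "ennreal (\<phi> (\<mu> * \<bar>sampling_kantorovich t chi w f x - f x\<bar>))
    \<le> ennreal (1 / 3) * (ennreal (1 / m) * kernel_mean_deviation t L (\<lambda>v. \<eta> \<bar>lam * v\<bar>) w f x
        + ennreal (w / \<delta>) * (\<integral>\<^sup>+s\<in>{0..\<Delta> / w}. ennreal (\<eta> \<bar>lam * (f (x + s) - f x)\<bar>) \<partial>lborel)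
        + ennreal (\<phi> (3 * \<mu> * R)))"
proof -
  define V where "V k = interval_mean f (t k / w) (t (k + 1) / w)" for k
  define W where "W k = interval_mean (\<lambda>u. f (x + u - t k / w)) (t k / w) (t (k + 1) / w)" for k
  have "ennreal (\<phi> (\<mu> * \<bar>sampling_kantorovich t chi w f x - f x\<bar>))
    \<le> ennreal (1 / 3) * (ennreal (1 / m) * nn_sum (\<lambda>k. L (w * x - t k) * \<eta> \<bar>lam * \<bar>V k - W k\<bar>\<bar>)
        + ennreal (1 / m) * nn_sum (\<lambda>k. L (w * x - t k) * \<eta> \<bar>lam * \<bar>W k - f x\<bar>\<bar>)
        + ennreal (\<phi> (3 * \<mu> * R)))"
    unfolding sampling_kantorovich_interval_mean V_def[symmetric]
    by (rule kernel_sum_convex_estimate[where z = "\<lambda>k. w * x - t k" and E = "\<lambda>v. \<eta> \<bar>lam * v\<bar>"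
          and V' = W, OF phi psi lip Lnn sum_L m mu H _ summable_f error_f])
       (auto intro: phi_function_nonneg[OF eta(1)])
  also have "\<dots> \<le> ennreal (1 / 3) * (ennreal (1 / m) * kernel_mean_deviation t L (\<lambda>v. \<eta> \<bar>lam * v\<bar>) w f x
        + ennreal (w / \<delta>) * (\<integral>\<^sup>+s\<in>{0..\<Delta> / w}. ennreal (\<eta> \<bar>lam * (f (x + s) - f x)\<bar>) \<partial>lborel)
        + ennreal (\<phi> (3 * \<mu> * R)))"
    unfolding V_def W_def
    using nn_sum_kernel_mean_deviation_le[OF eta samp Lnn w f f_int, where x = x and lam = lam]
      nn_sum_kernel_translate_mean_le[OF eta samp Lnn sum_L m w f f_int, where lam = lam]
    by (intro mult_left_mono add_mono order.refl) auto
  finally show ?thesis .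
qed

lemma sampling_kantorovich_pointwise_bound:
  fixes f :: "real \<Rightarrow> real"
  assumes phi: "phi_function \<phi>" "convex_on {0..} \<phi>" and psi: "phi_function \<psi>"
    and eta: "phi_function \<eta>" "convex_on {0..} \<eta>" and samp: "sampling_sequence t \<delta> \<Delta>"
    and lip: "\<And>x u v. \<bar>chi x u - chi x v\<bar> \<le> L x * \<psi> \<bar>u - v\<bar>" and Lnn: "\<And>x. 0 \<le> L x"
    and chi1: "kernel_chi1 t chi"
    and sum_L: "\<And>u F. finite F \<Longrightarrow> (\<Sum>k\<in>F. L (u - t k)) \<le> m" and m: "0 < m"
    and f[measurable]: "f \<in> borel_measurable borel" and f_int: "\<And>a b. set_integrable lborel {a..b} f"
    and mu: "0 < \<mu>" and H: "\<And>v. 0 \<le> v \<Longrightarrow> \<phi> (3 * \<mu> * m * \<psi> v) \<le> \<eta> \<bar>lam * v\<bar>"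
    and err: "\<And>x v. \<bar>(\<Sum>\<^sub>\<infinity>k. chi (w * x - t k) v) - v\<bar> \<le> C * w powr (- \<theta>) * \<bar>v\<bar>"
    and C: "0 \<le> C" "3 * \<mu> * C \<le> 1" and w_ge_1: "1 \<le> w" and \<theta>: "0 \<le> \<theta>"
  shows "ennreal (\<phi> \<bar>\<mu> * (sampling_kantorovich t chi w f x - f x)\<bar>)
    \<le> ennreal (1 / 3) * (ennreal (1 / m) * kernel_mean_deviation t L (\<lambda>v. \<eta> \<bar>lam * v\<bar>) w f x
        + ennreal (w / \<delta>) * (\<integral>\<^sup>+s\<in>{0..\<Delta> / w}. ennreal (\<eta> \<bar>lam * (f (x + s) - f x)\<bar>) \<partial>lborel)
        + ennreal (w powr (- \<theta>)) * ennreal (\<phi> \<bar>f x\<bar>))"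
proof -
  have "(\<lambda>k. \<bar>chi (w * x - t k) (f x)\<bar>) summable_on UNIV"
    using chi1 w_ge_1 unfolding kernel_chi1_def by auto
  then have summable_f: "(\<lambda>k. chi (w * x - t k) (f x)) summable_on UNIV"
    using summable_on_iff_abs_summable_on_real[of "\<lambda>k. chi (w * x - t k) (f x)"] by simp
  have w_pow: "0 \<le> w powr (- \<theta>)" "w powr (- \<theta>) \<le> 1"
    using w_ge_1 \<theta> by (auto simp: powr_minus_divide ge_one_powr_ge_zero)
  have "\<phi> (3 * \<mu> * (C * w powr (- \<theta>) * \<bar>f x\<bar>)) \<le> \<phi> (w powr (- \<theta>) * \<bar>f x\<bar>)"
    using C mu w_pow mult_right_mono[OF C(2), of "w powr (- \<theta>) * \<bar>f x\<bar>"]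
    by (intro phi_function_mono[OF phi(1)]) (simp_all add: ac_simps)
  also have "\<dots> \<le> w powr (- \<theta>) * \<phi> \<bar>f x\<bar>"
    by (rule convex_on_scale_le[OF phi(2) phi_function_0[OF phi(1)] w_pow]) simp
  finally have "ennreal (\<phi> (3 * \<mu> * (C * w powr (- \<theta>) * \<bar>f x\<bar>)))
      \<le> ennreal (w powr (- \<theta>) * \<phi> \<bar>f x\<bar>)"
    by (rule ennreal_leI)
  also have "\<dots> = ennreal (w powr (- \<theta>)) * ennreal (\<phi> \<bar>f x\<bar>)"
    by (rule ennreal_mult') (rule w_pow(1))
  finally have R: "ennreal (\<phi> (3 * \<mu> * (C * w powr (- \<theta>) * \<bar>f x\<bar>)))
      \<le> ennreal (w powr (- \<theta>)) * ennreal (\<phi> \<bar>f x\<bar>)" .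
  have "ennreal (\<phi> (\<mu> * \<bar>sampling_kantorovich t chi w f x - f x\<bar>))
    \<le> ennreal (1 / 3) * (ennreal (1 / m) * kernel_mean_deviation t L (\<lambda>v. \<eta> \<bar>lam * v\<bar>) w f x
        + ennreal (w / \<delta>) * (\<integral>\<^sup>+s\<in>{0..\<Delta> / w}. ennreal (\<eta> \<bar>lam * (f (x + s) - f x)\<bar>) \<partial>lborel)
        + ennreal (\<phi> (3 * \<mu> * (C * w powr (- \<theta>) * \<bar>f x\<bar>))))"
    by (rule sampling_kantorovich_pointwise_estimate[where w = w and x = x, OF phi psi eta samp lip Lnn
        sum_L m _ f f_int mu H summable_f err[of x "f x"]]) (use w_ge_1 in auto)
  also have "\<dots> \<le> ennreal (1 / 3) * (ennreal (1 / m) * kernel_mean_deviation t L (\<lambda>v. \<eta> \<bar>lam * v\<bar>) w f x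
        + ennreal (w / \<delta>) * (\<integral>\<^sup>+s\<in>{0..\<Delta> / w}. ennreal (\<eta> \<bar>lam * (f (x + s) - f x)\<bar>) \<partial>lborel)
        + ennreal (w powr (- \<theta>)) * ennreal (\<phi> \<bar>f x\<bar>))"
    using R by (intro mult_left_mono add_mono order.refl) auto
  finally show ?thesis using mu by (simp add: abs_mult)
qed

section \<open>The integrated estimate\<close>

text \<open>\<open>L\<close> is only Lebesgue measurable; Tonelli's theorem is applied to a Borel representative \<open>Lb\<close>.\<close>
lemma AE_kernel_mean_deviation_eq:
  assumes "AE x in lborel. L x = Lb x" "0 < w"
  shows "AE x in lborel. kernel_mean_deviation t L G w f x = kernel_mean_deviation t Lb G w f x"
proof -
  have "AE x in lborel. L (- t k + w * x) = Lb (- t k + w * x)" for k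
    using AE_lborel_affine_eq[OF assms(1), of w "- t k"] assms(2) by simp
  then have "AE x in lborel. \<forall>k. L (w * x - t k) = Lb (w * x - t k)"
    by (subst AE_all_countable) (simp add: algebra_simps)
  then show ?thesis
    unfolding kernel_mean_deviation_def by eventually_elim (simp add: algebra_simps)
qed

lemma nn_integral_kernel_translate:
  fixes Lb f :: "real \<Rightarrow> real"
  assumes eta: "phi_function \<eta>" and [measurable]: "Lb \<in> borel_measurable borel" "f \<in> borel_measurable borel"
    "A \<in> sets borel" and w: "0 < w"
  shows "(\<integral>\<^sup>+x. ennreal (Lb (w * x - c))
      * (\<integral>\<^sup>+u\<in>A. ennreal (\<eta> \<bar>lam * (f u - f (x + u - c / w))\<bar>) \<partial>lborel) \<partial>lborel)
    = (\<integral>\<^sup>+u\<in>A. (\<integral>\<^sup>+y. ennreal (Lb (w * y)) * ennreal (\<eta> \<bar>lam * (f (u + y) - f u)\<bar>) \<partial>lborel) \<partial>lborel)"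
proof -
  note [measurable] = phi_function_measurable[OF eta]
  have "(\<integral>\<^sup>+x. ennreal (Lb (w * x - c))
      * (\<integral>\<^sup>+u\<in>A. ennreal (\<eta> \<bar>lam * (f u - f (x + u - c / w))\<bar>) \<partial>lborel) \<partial>lborel)
      = (\<integral>\<^sup>+x. (\<integral>\<^sup>+u. ennreal (Lb (w * x - c)) * ennreal (\<eta> \<bar>lam * (f u - f (x + u - c / w))\<bar>) * indicator A u \<partial>lborel) \<partial>lborel)"
    by (intro nn_integral_cong) (simp add: nn_integral_cmult[symmetric] mult.assoc)
  also have "\<dots> = (\<integral>\<^sup>+u. (\<integral>\<^sup>+x. ennreal (Lb (w * x - c))
      * ennreal (\<eta> \<bar>lam * (f u - f (x + u - c / w))\<bar>) * indicator A u \<partial>lborel) \<partial>lborel)"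
    by (rule lborel_pair.Fubini'[symmetric]) measurable
  also have "\<dots> = (\<integral>\<^sup>+u\<in>A. (\<integral>\<^sup>+y. ennreal (Lb (w * y))
      * ennreal (\<eta> \<bar>lam * (f (u + y) - f u)\<bar>) \<partial>lborel) \<partial>lborel)"
  proof (intro nn_integral_cong)
    fix u
    have "(\<integral>\<^sup>+x. ennreal (Lb (w * x - c)) * ennreal (\<eta> \<bar>lam * (f u - f (x + u - c / w))\<bar>) \<partial>lborel)
        = (\<integral>\<^sup>+y. ennreal (Lb (w * (c / w + 1 * y) - c)) * ennreal (\<eta> \<bar>lam * (f u - f ((c / w + 1 * y) + u - c / w))\<bar>) \<partial>lborel)"
      using nn_integral_real_affine[where c=1 and t="c / w",
          of "\<lambda>x. ennreal (Lb (w * x - c)) * ennreal (\<eta> \<bar>lam * (f u - f (x + u - c / w))\<bar>)"]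
      by simp
    also have "\<dots> = (\<integral>\<^sup>+y. ennreal (Lb (w * y)) * ennreal (\<eta> \<bar>lam * (f (u + y) - f u)\<bar>) \<partial>lborel)"
    proof -
      have "w * (c / w + 1 * y) - c = w * y" "c / w + 1 * y + u - c / w = u + y"
        "\<bar>lam * (f u - f (u + y))\<bar> = \<bar>lam * (f (u + y) - f u)\<bar>" for y
        using w by (simp_all add: field_simps abs_mult abs_minus_commute)
      then show ?thesis by (simp only:)
    qed
    finally show "(\<integral>\<^sup>+x. ennreal (Lb (w * x - c))
        * ennreal (\<eta> \<bar>lam * (f u - f (x + u - c / w))\<bar>) * indicator A u \<partial>lborel)
        = (\<integral>\<^sup>+y. ennreal (Lb (w * y)) * ennreal (\<eta> \<bar>lam * (f (u + y) - f u)\<bar>) \<partial>lborel) * indicator A u"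
      by (simp add: nn_integral_multc)
  qed
  finally show ?thesis .
qed

lemma kernel_mean_deviation_integral_le:
  fixes Lb f :: "real \<Rightarrow> real"
  assumes eta: "phi_function \<eta>" and samp: "sampling_sequence t \<delta> \<Delta>" and w: "0 < w"
    and [measurable]: "Lb \<in> borel_measurable borel" "f \<in> borel_measurable borel"
  shows "(\<integral>\<^sup>+x. kernel_mean_deviation t Lb (\<lambda>v. \<eta> \<bar>lam * v\<bar>) w f x \<partial>lborel)
    \<le> ennreal (w / \<delta>) * (\<integral>\<^sup>+y. ennreal (Lb (w * y)) * modular \<eta> (\<lambda>u. lam * (f (u + y) - f u)) \<partial>lborel)"
proof -
  note [measurable] = phi_function_measurable[OF eta]
  define \<Phi> where "\<Phi> u
      = (\<integral>\<^sup>+y. ennreal (Lb (w * y)) * ennreal (\<eta> \<bar>lam * (f (u + y) - f u)\<bar>) \<partial>lborel)" for u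
  have [measurable]: "\<Phi> \<in> borel_measurable borel" unfolding \<Phi>_def by measurable
  have "(\<integral>\<^sup>+x. kernel_mean_deviation t Lb (\<lambda>v. \<eta> \<bar>lam * v\<bar>) w f x \<partial>lborel)
      = (\<integral>\<^sup>+k. ennreal (w / (t (k + 1) - t k)) * (\<integral>\<^sup>+u\<in>{t k / w..t (k + 1) / w}. \<Phi> u \<partial>lborel) \<partial>count_space UNIV)"
    unfolding kernel_mean_deviation_def
  proof (subst nn_integral_count_space_nn_integral, simp, measurable, intro nn_integral_cong)
    fix k
    have "(\<integral>\<^sup>+x. ennreal (Lb (w * x - t k)) * (ennreal (w / (t (k + 1) - t k))
          * (\<integral>\<^sup>+u\<in>{t k / w..t (k + 1) / w}. ennreal (\<eta> \<bar>lam * (f u - f (x + u - t k / w))\<bar>) \<partial>lborel)) \<partial>lborel)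
        = ennreal (w / (t (k + 1) - t k)) * (\<integral>\<^sup>+x. ennreal (Lb (w * x - t k))
          * (\<integral>\<^sup>+u\<in>{t k / w..t (k + 1) / w}. ennreal (\<eta> \<bar>lam * (f u - f (x + u - t k / w))\<bar>) \<partial>lborel) \<partial>lborel)"
      by (subst nn_integral_cmult[symmetric]) (measurable, simp add: ac_simps)
    then show "(\<integral>\<^sup>+x. ennreal (Lb (w * x - t k)) * (ennreal (w / (t (k + 1) - t k))
          * (\<integral>\<^sup>+u\<in>{t k / w..t (k + 1) / w}. ennreal (\<eta> \<bar>lam * (f u - f (x + u - t k / w))\<bar>) \<partial>lborel)) \<partial>lborel)
        = ennreal (w / (t (k + 1) - t k)) * (\<integral>\<^sup>+u\<in>{t k / w..t (k + 1) / w}. \<Phi> u \<partial>lborel)"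
      unfolding \<Phi>_def by (simp add: nn_integral_kernel_translate[OF eta _ _ _ w])
  qed
  also have "\<dots> \<le> (\<integral>\<^sup>+k. ennreal (w / \<delta>)
      * (\<integral>\<^sup>+u\<in>{t k / w..t (k + 1) / w}. \<Phi> u \<partial>lborel) \<partial>count_space UNIV)"
    using sampling_interval_length(4)[OF samp w] by (intro nn_integral_mono mult_right_mono ennreal_leI) auto
  also have "\<dots> \<le> ennreal (w / \<delta>) * (\<integral>\<^sup>+u. \<Phi> u \<partial>lborel)"
    using nn_integral_sampling_intervals_le[OF samp w, of \<Phi>]
    by (simp add: nn_integral_cmult mult_left_mono)
  also have "(\<integral>\<^sup>+u. \<Phi> u \<partial>lborel)
      = (\<integral>\<^sup>+y. ennreal (Lb (w * y)) * modular \<eta> (\<lambda>u. lam * (f (u + y) - f u)) \<partial>lborel)"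
    unfolding \<Phi>_def modular_lborel
    by (subst lborel_pair.Fubini') (measurable, simp add: nn_integral_cmult)
  finally show ?thesis .
qed

lemma kernel_modulus_split_le:
  fixes Lb f :: "real \<Rightarrow> real"
  assumes eta: "phi_function \<eta>" "convex_on {0..} \<eta>"
    and [measurable]: "f \<in> borel_measurable borel" "Lb \<in> borel_measurable borel"
  shows "(\<integral>\<^sup>+y. ennreal (Lb (w * y)) * modular \<eta> (\<lambda>u. 1 / 2 * (f (u + y) - f u)) \<partial>lborel)
    \<le> modulus \<eta> (1 / 2) f d * (\<integral>\<^sup>+y. ennreal (Lb (w * y)) \<partial>lborel)
      + modular \<eta> f * (\<integral>\<^sup>+y\<in>{y. d < \<bar>y\<bar>}. ennreal (Lb (w * y)) \<partial>lborel)"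
proof -
  have "ennreal (Lb (w * y)) * modular \<eta> (\<lambda>u. 1 / 2 * (f (u + y) - f u))
      \<le> modulus \<eta> (1 / 2) f d * ennreal (Lb (w * y)) + modular \<eta> f * (ennreal (Lb (w * y)) * indicator {y. d < \<bar>y\<bar>} y)" for y
  proof (cases "d < \<bar>y\<bar>")
    case True
    have "ennreal (Lb (w * y)) * modular \<eta> (\<lambda>u. 1 / 2 * (f (u + y) - f u)) \<le> ennreal (Lb (w * y)) * modular \<eta> f"
      using modular_translate_half_diff_le[OF eta, of f y] by (rule mult_left_mono) simp_all
    also have "\<dots> = modular \<eta> f * (ennreal (Lb (w * y)) * indicator {y. d < \<bar>y\<bar>} y)"
      using True by (simp add: mult.commute)
    also have "\<dots> \<le> modulus \<eta> (1 / 2) f d * ennreal (Lb (w * y)) + \<dots>"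
      by (rule add_increasing[OF zero_le order_refl])
    finally show ?thesis .
  next
    case False
    then have "modular \<eta> (\<lambda>u. 1 / 2 * (f (u + y) - f u)) \<le> modulus \<eta> (1 / 2) f d"
      unfolding modulus_def by (intro SUP_upper) auto
    then show ?thesis using False by (simp add: mult.commute mult_left_mono)
  qed
  then have "(\<integral>\<^sup>+y. ennreal (Lb (w * y)) * modular \<eta> (\<lambda>u. 1 / 2 * (f (u + y) - f u)) \<partial>lborel)
      \<le> (\<integral>\<^sup>+y. modulus \<eta> (1 / 2) f d * ennreal (Lb (w * y)) + modular \<eta> f * (ennreal (Lb (w * y)) * indicator {y. d < \<bar>y\<bar>} y) \<partial>lborel)"
    by (rule nn_integral_mono)
  also have "\<dots> = modulus \<eta> (1 / 2) f d * (\<integral>\<^sup>+y. ennreal (Lb (w * y)) \<partial>lborel)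
      + modular \<eta> f * (\<integral>\<^sup>+y\<in>{y. d < \<bar>y\<bar>}. ennreal (Lb (w * y)) \<partial>lborel)"
    by (subst nn_integral_add) (measurable, simp add: nn_integral_cmult)
  finally show ?thesis .
qed

lemma kernel_mean_deviation_integral_bound:
  fixes f L Lb :: "real \<Rightarrow> real"
  assumes eta: "phi_function \<eta>" "convex_on {0..} \<eta>" and samp: "sampling_sequence t \<delta> \<Delta>" and w: "0 < w"
    and L_int: "integrable lebesgue L" and Lnn: "\<And>x. 0 \<le> L x"
    and Lb[measurable]: "Lb \<in> borel_measurable borel" and Lb_ae: "AE x in lborel. L x = Lb x"
    and f[measurable]: "f \<in> borel_measurable borel"
    and tail: "w * (LINT y:{y. d < \<bar>y\<bar>}|lebesgue. L (w * y)) \<le> M * r"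
  shows "(\<integral>\<^sup>+x. kernel_mean_deviation t Lb (\<lambda>v. \<eta> \<bar>1 / 2 * v\<bar>) w f x \<partial>lborel)
    \<le> ennreal (w / \<delta>) * (modulus \<eta> (1 / 2) f d * ennreal ((LINT x|lebesgue. L x) / w)
      + modular \<eta> f * ennreal (M * r / w))"
proof -
  have "(\<integral>\<^sup>+x. kernel_mean_deviation t Lb (\<lambda>v. \<eta> \<bar>1 / 2 * v\<bar>) w f x \<partial>lborel)
      \<le> ennreal (w / \<delta>) * (\<integral>\<^sup>+y. ennreal (Lb (w * y)) * modular \<eta> (\<lambda>u. 1 / 2 * (f (u + y) - f u)) \<partial>lborel)"
    by (rule kernel_mean_deviation_integral_le[OF eta(1) samp w Lb f])
  also have "\<dots> \<le> ennreal (w / \<delta>) * (modulus \<eta> (1 / 2) f d * (\<integral>\<^sup>+y. ennreal (Lb (w * y)) \<partial>lborel)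
      + modular \<eta> f * (\<integral>\<^sup>+y\<in>{y. d < \<bar>y\<bar>}. ennreal (Lb (w * y)) \<partial>lborel))"
    by (intro mult_left_mono kernel_modulus_split_le[OF eta f Lb]) simp
  also have "(\<integral>\<^sup>+y. ennreal (Lb (w * y)) \<partial>lborel) = ennreal ((LINT x|lebesgue. L x) / w)"
    using Lnn w by (simp add: nn_integral_dilate[OF Lb w] nn_integral_representative_eq_integral[OF L_int _ Lb_ae]
        ennreal_mult'[symmetric])
  also have "(\<integral>\<^sup>+y\<in>{y. d < \<bar>y\<bar>}. ennreal (Lb (w * y)) \<partial>lborel)
      = ennreal (LINT y:{y. d < \<bar>y\<bar>}|lebesgue. L (w * y))"
    by (rule nn_integral_borel_representative[OF L_int Lnn Lb Lb_ae w]) measurable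
  also have "\<dots> \<le> ennreal (M * r / w)"
    using tail w by (intro ennreal_leI) (simp add: field_simps)
  finally show ?thesis by (simp add: mult_left_mono)
qed

lemma ennreal_mult_reassoc3:
  "0 \<le> a \<Longrightarrow> 0 \<le> b \<Longrightarrow> 0 \<le> c \<Longrightarrow> ennreal a
      * (ennreal b * (X * ennreal c)) = ennreal (a * b * c) * X"
  by (simp add: ennreal_mult ac_simps)

lemma ennreal_mult_reassoc4:
  "0 \<le> a \<Longrightarrow> 0 \<le> b \<Longrightarrow> 0 \<le> c \<Longrightarrow> 0 \<le> d \<Longrightarrow>
    ennreal a * (ennreal b * (ennreal c * (X * ennreal d))) = ennreal (a * b * c * d) * X"
  by (simp add: ennreal_mult ac_simps)

lemma kantorovich_bound_rearrange:
  assumes "0 < w" "0 < \<delta>" "0 < m" "0 \<le> N" "0 \<le> M" "0 \<le> r" "0 \<le> \<Delta>" "0 \<le> s"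
  shows "ennreal (1 / 3) * (ennreal (1 / m) * (ennreal (w / \<delta>) * (\<omega>\<^sub>1 * ennreal (N / w) + Z * ennreal (M * r / w)))
        + ennreal (w / \<delta>) * (\<omega>\<^sub>2 * ennreal (\<Delta> / w)) + ennreal s * \<Phi>)
    = ennreal (N / (3 * \<delta> * m)) * \<omega>\<^sub>1 + ennreal (M / (3 * \<delta> * m)) * Z * ennreal r
      + ennreal (\<Delta> / (3 * \<delta>)) * \<omega>\<^sub>2 + ennreal (1 / 3) * \<Phi> * ennreal s"
proof -
  have "ennreal (1 / 3) * (ennreal (1 / m) * (ennreal (w / \<delta>) * (\<omega>\<^sub>1 * ennreal (N / w))))
      = ennreal (1 / 3 * (1 / m) * (w / \<delta>) * (N / w)) * \<omega>\<^sub>1"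
    using assms by (intro ennreal_mult_reassoc4) simp_all
  moreover have "ennreal (1 / 3) * (ennreal (1 / m) * (ennreal (w / \<delta>) * (Z * ennreal (M * r / w))))
      = ennreal (1 / 3 * (1 / m) * (w / \<delta>) * (M * r / w)) * Z"
    using assms by (intro ennreal_mult_reassoc4) simp_all
  moreover have "ennreal (1 / 3) * (ennreal (w / \<delta>) * (\<omega>\<^sub>2 * ennreal (\<Delta> / w)))
      = ennreal (1 / 3 * (w / \<delta>) * (\<Delta> / w)) * \<omega>\<^sub>2"
    using assms by (intro ennreal_mult_reassoc3) simp_all
  moreover have "1 / 3 * (1 / m) * (w / \<delta>) * (N / w) = N / (3 * \<delta> * m)"
    "1 / 3 * (1 / m) * (w / \<delta>) * (M * r / w) = M / (3 * \<delta> * m) * r"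
    "1 / 3 * (w / \<delta>) * (\<Delta> / w) = \<Delta> / (3 * \<delta>)"
    using assms by (simp_all add: field_simps)
  moreover have "ennreal (M / (3 * \<delta> * m) * r) = ennreal (M / (3 * \<delta> * m)) * ennreal r"
    using assms by (intro ennreal_mult) simp_all
  ultimately show ?thesis
    by (simp only: distrib_left mult.assoc[symmetric]) (simp add: ac_simps)
qed

lemma sampling_kantorovich_modular_le:
  fixes f :: "real \<Rightarrow> real"
  assumes phi: "phi_function \<phi>" "convex_on {0..} \<phi>" and psi: "phi_function \<psi>"
    and eta: "phi_function \<eta>" "convex_on {0..} \<eta>" and samp: "sampling_sequence t \<delta> \<Delta>"
    and lip: "\<And>x u v. \<bar>chi x u - chi x v\<bar> \<le> L x * \<psi> \<bar>u - v\<bar>" and Lnn: "\<And>x. 0 \<le> L x"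
    and chi1: "kernel_chi1 t chi" and L_int: "integrable lebesgue L"
    and Lb[measurable]: "Lb \<in> borel_measurable borel" and Lb_ae: "AE x in lborel. L x = Lb x"
    and sum_L: "\<And>u F. finite F \<Longrightarrow> (\<Sum>k\<in>F. L (u - t k)) \<le> m" and m: "0 < m"
    and f[measurable]: "f \<in> borel_measurable borel" and f_int: "\<And>a b. set_integrable lborel {a..b} f"
    and mu: "0 < \<mu>" and H: "\<And>v. 0 \<le> v \<Longrightarrow> \<phi> (3 * \<mu> * m * \<psi> v) \<le> \<eta> \<bar>1 / 2 * v\<bar>"
    and err: "\<And>x v. \<bar>(\<Sum>\<^sub>\<infinity>k. chi (w * x - t k) v) - v\<bar> \<le> C * w powr (- \<theta>) * \<bar>v\<bar>"
    and C: "0 \<le> C" "3 * \<mu> * C \<le> 1" and w_ge_1: "1 \<le> w" and \<theta>: "0 \<le> \<theta>"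
    and tail: "w * (LINT y:{y. d < \<bar>y\<bar>}|lebesgue. L (w * y)) \<le> M * r" and M: "0 \<le> M" "0 \<le> r"
  shows "modular \<phi> (\<lambda>x. \<mu> * (sampling_kantorovich t chi w f x - f x))
    \<le> ennreal ((LINT x|lebesgue. L x) / (3 * \<delta> * m)) * modulus \<eta> (1 / 2) f d
      + ennreal (M / (3 * \<delta> * m)) * modular \<eta> f * ennreal r + ennreal (\<Delta> / (3 * \<delta>)) * modulus \<eta> (1 / 2) f (\<Delta> / w)
      + ennreal (1 / 3) * modular \<phi> f * ennreal (w powr (- \<theta>))"
proof -
  note [measurable] = phi_function_measurable[OF eta(1)] phi_function_measurable[OF phi(1)]
  have w: "0 < w" using w_ge_1 by simp
  have \<delta>: "0 < \<delta>" "0 \<le> \<Delta>" using sampling_sequenceD(1,2)[OF samp] by auto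
  define A where "A x = kernel_mean_deviation t Lb (\<lambda>v. \<eta> \<bar>1 / 2 * v\<bar>) w f x" for x
  define K where "K x = (\<integral>\<^sup>+s\<in>{0..\<Delta> / w}. ennreal (\<eta> \<bar>1 / 2 * (f (x + s) - f x)\<bar>) \<partial>lborel)" for x
  have [measurable]: "A \<in> borel_measurable borel"
    unfolding A_def kernel_mean_deviation_def by (intro borel_measurable_nn_integral_count_space) measurable
  have [measurable]: "K \<in> borel_measurable borel" unfolding K_def by measurable
  have "AE x in lborel. ennreal (\<phi> \<bar>\<mu> * (sampling_kantorovich t chi w f x - f x)\<bar>)
      \<le> ennreal (1 / 3) * (ennreal (1 / m) * A x + ennreal (w / \<delta>) * K x + ennreal (w powr (- \<theta>)) * ennreal (\<phi> \<bar>f x\<bar>))"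
    using AE_kernel_mean_deviation_eq[OF Lb_ae w, of t "\<lambda>v. \<eta> \<bar>1 / 2 * v\<bar>" f]
  proof eventually_elim
    case (elim x)
    then show ?case
      using sampling_kantorovich_pointwise_bound[where x = x, OF phi psi eta samp lip Lnn chi1 sum_L m f f_int
          mu H err C w_ge_1 \<theta>]
      by (simp add: A_def K_def)
  qed
  then have "modular \<phi> (\<lambda>x. \<mu> * (sampling_kantorovich t chi w f x - f x))
      \<le> (\<integral>\<^sup>+x. ennreal (1 / 3) * (ennreal (1 / m) * A x + ennreal (w / \<delta>) * K x + ennreal (w powr (- \<theta>)) * ennreal (\<phi> \<bar>f x\<bar>)) \<partial>lborel)"
    unfolding modular_lborel by (rule nn_integral_mono_AE)
  also have "\<dots> = ennreal (1 / 3)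
      * (ennreal (1 / m) * (\<integral>\<^sup>+x. A x \<partial>lborel) + ennreal (w / \<delta>) * (\<integral>\<^sup>+x. K x \<partial>lborel)
      + ennreal (w powr (- \<theta>)) * modular \<phi> f)"
    by (simp add: modular_lborel nn_integral_add nn_integral_cmult)
  also have "\<dots> \<le> ennreal (1 / 3)
      * (ennreal (1 / m) * (ennreal (w / \<delta>) * (modulus \<eta> (1 / 2) f d * ennreal ((LINT x|lebesgue. L x) / w) + modular \<eta> f * ennreal (M * r / w)))
      + ennreal (w / \<delta>) * (modulus \<eta> (1 / 2) f (\<Delta> / w) * ennreal (\<Delta> / w)) + ennreal (w powr (- \<theta>)) * modular \<phi> f)"
  proof (intro mult_left_mono add_mono order.refl)
    show "(\<integral>\<^sup>+x. A x \<partial>lborel) \<le> ennreal (w / \<delta>)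
        * (modulus \<eta> (1 / 2) f d * ennreal ((LINT x|lebesgue. L x) / w) + modular \<eta> f * ennreal (M * r / w))"
      unfolding A_def by (rule kernel_mean_deviation_integral_bound[OF eta samp w L_int Lnn Lb Lb_ae f tail])
    show "(\<integral>\<^sup>+x. K x \<partial>lborel) \<le> modulus \<eta> (1 / 2) f (\<Delta> / w) * ennreal (\<Delta> / w)"
      unfolding K_def using nn_integral_modulus_le[OF eta(1) f, of "\<Delta> / w" "1 / 2"] w \<delta> by (simp add: mult.commute)
  qed simp_all
  also have "\<dots> = ennreal ((LINT x|lebesgue. L x) / (3 * \<delta> * m)) * modulus \<eta> (1 / 2) f d
      + ennreal (M / (3 * \<delta> * m)) * modular \<eta> f * ennreal r + ennreal (\<Delta> / (3 * \<delta>)) * modulus \<eta> (1 / 2) f (\<Delta> / w)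
      + ennreal (1 / 3) * modular \<phi> f * ennreal (w powr (- \<theta>))"
    using Lnn by (intro kantorovich_bound_rearrange[OF w \<delta>(1) m _ M \<delta>(2)]) (simp_all add: integral_nonneg_AE)
  finally show ?thesis .
qed

lemma cond_H_scaled:
  assumes phi: "phi_function \<phi>" and psi: "phi_function \<psi>" and H: "cond_H \<phi> \<eta> \<psi>"
    and m: "0 < m" and C: "0 < C"
  obtains \<mu> where "0 < \<mu>" "3 * \<mu> * C \<le> 1"
    "\<And>v. 0 \<le> v \<Longrightarrow> \<phi> (3 * \<mu> * m * \<psi> v) \<le> \<eta> \<bar>1 / 2 * v\<bar>"
proof -
  have "\<exists>c. 0 < c \<and> c < 1 \<and> (\<forall>u\<ge>0. \<phi> (c * \<psi> u) \<le> \<eta> (1 / 2 * u))"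
    using H unfolding cond_H_def by (elim conjE allE[of _ "1 / 2"]) simp
  then obtain c where c: "0 < c" and cH: "\<And>u. 0 \<le> u \<Longrightarrow> \<phi> (c * \<psi> u) \<le> \<eta> (1 / 2 * u)"
    by blast
  define \<mu> where "\<mu> = min (c / (3 * m)) (1 / (3 * C))"
  have mu: "0 < \<mu>" "3 * \<mu> * C \<le> 1" "3 * \<mu> * m \<le> c"
    using c C m by (auto simp: \<mu>_def min_def field_simps)
  have "\<phi> (3 * \<mu> * m * \<psi> v) \<le> \<eta> \<bar>1 / 2 * v\<bar>" if "0 \<le> v" for v
  proof -
    have "\<phi> (3 * \<mu> * m * \<psi> v) \<le> \<phi> (c * \<psi> v)"
      using mu m phi_function_nonneg[OF psi that]
      by (intro phi_function_mono[OF phi] mult_right_mono) auto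
    then show ?thesis using cH[OF that] that by simp
  qed
  with mu that show ?thesis by blast
qed

lemma sampling_kantorovich_modular_estimate_borel:
  fixes t :: "int \<Rightarrow> real" and chi :: "real \<Rightarrow> real \<Rightarrow> real"
    and L \<psi> \<phi> \<eta> f :: "real \<Rightarrow> real"
  assumes samp: "sampling_sequence t \<delta> \<Delta>"
    and chi1: "kernel_chi1 t chi" and chi2: "kernel_chi2 chi"
    and chi3: "kernel_chi3 chi L \<psi>" and chi4: "kernel_chi4 t chi \<theta>\<^sub>0"
    and L1: "cond_L1 L" and L2: "cond_L2 t L"
    and phi: "phi_function \<phi>" "convex_on {0..} \<phi>" and eta: "phi_function \<eta>" "convex_on {0..} \<eta>"
    and H: "cond_H \<phi> \<eta> \<psi>" and f[measurable]: "f \<in> borel_measurable borel" "f \<in> orlicz \<phi>"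
    and M1: "0 < M\<^sub>1" and tail: "\<And>w. W\<^sub>1 \<le> w \<Longrightarrow>
      w * (LINT y:{y. 1 / w powr \<alpha> < \<bar>y\<bar>}|lebesgue. L (w * y)) \<le> M\<^sub>1 * w powr (- \<alpha>\<^sub>0)"
  shows "\<exists>\<mu>>0. \<exists>W. \<forall>w\<ge>W. modular \<phi> (\<lambda>x. \<mu> * (sampling_kantorovich t chi w f x - f x))
      \<le> ennreal ((LINT x|lebesgue. L x) / (3 * \<delta> * m0 t L)) * modulus \<eta> (1 / 2) f (1 / w powr \<alpha>)
       + ennreal (M\<^sub>1 / (3 * \<delta> * m0 t L)) * modular \<eta> f * ennreal (w powr (- \<alpha>\<^sub>0))
       + ennreal (\<Delta> / (3 * \<delta>)) * modulus \<eta> (1 / 2) f (\<Delta> / w)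
       + ennreal (1 / 3) * modular \<phi> f * ennreal (w powr (- \<theta>\<^sub>0))"
proof -
  have Lnn: "\<And>x. 0 \<le> L x" and lip: "\<And>x u v. \<bar>chi x u - chi x v\<bar> \<le> L x * \<psi> \<bar>u - v\<bar>"
    and psi: "phi_function \<psi>" and L_meas: "L \<in> borel_measurable lebesgue"
    using chi3 unfolding kernel_chi3_def by auto
  have L_int: "integrable lebesgue L" using L1 unfolding cond_L1_def by auto
  have \<theta>: "0 \<le> \<theta>\<^sub>0" using chi4 unfolding kernel_chi4_def by simp
  have f_int: "set_integrable lborel {a..b} f" for a b by (rule orlicz_set_integrable[OF phi f])
  obtain Lb where Lb[measurable]: "Lb \<in> borel_measurable borel" and Lb_ae: "AE x in lborel. L x = Lb x"
    using completion_ex_borel_measurable_real[OF L_meas] by auto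
  obtain C W\<^sub>0 where C: "0 < C" and err: "\<And>w x v. W\<^sub>0 \<le> w \<Longrightarrow>
      \<bar>(\<Sum>\<^sub>\<infinity>k. chi (w * x - t k) v) - v\<bar> \<le> C * w powr (- \<theta>\<^sub>0) * \<bar>v\<bar>"
    using kernel_chi4_error_bound[OF chi2 chi4] by blast
  have m: "0 < m0 t L" by (rule m0_pos[OF samp chi2 chi3 chi4 L1 L2])
  obtain \<mu> where mu: "0 < \<mu>" "3 * \<mu> * C \<le> 1"
    and H': "\<And>v. 0 \<le> v \<Longrightarrow> \<phi> (3 * \<mu> * m0 t L * \<psi> v) \<le> \<eta> \<bar>1 / 2 * v\<bar>"
    using cond_H_scaled[OF phi(1) psi H m C] by blast
  have "modular \<phi> (\<lambda>x. \<mu> * (sampling_kantorovich t chi w f x - f x))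
      \<le> ennreal ((LINT x|lebesgue. L x) / (3 * \<delta> * m0 t L)) * modulus \<eta> (1 / 2) f (1 / w powr \<alpha>)
       + ennreal (M\<^sub>1 / (3 * \<delta> * m0 t L)) * modular \<eta> f * ennreal (w powr (- \<alpha>\<^sub>0))
       + ennreal (\<Delta> / (3 * \<delta>)) * modulus \<eta> (1 / 2) f (\<Delta> / w)
       + ennreal (1 / 3) * modular \<phi> f * ennreal (w powr (- \<theta>\<^sub>0))" if "max (max W\<^sub>0 W\<^sub>1) 1 \<le> w" for w
    using that M1 C sampling_kernel_finite_sum_le_m0[OF samp Lnn L1 L2]
    by (intro sampling_kantorovich_modular_le[OF phi psi eta samp lip Lnn chi1 L_int Lb Lb_ae _ m f(1) f_int
          mu(1) H' err _ mu(2) _ \<theta> tail]) auto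
  with mu(1) show ?thesis by blast
qed

lemma sampling_kantorovich_modular_estimate:
  fixes t :: "int \<Rightarrow> real" and chi :: "real \<Rightarrow> real \<Rightarrow> real"
    and L \<psi> \<phi> \<eta> f :: "real \<Rightarrow> real"
  assumes samp: "sampling_sequence t \<delta> \<Delta>"
    and chi1: "kernel_chi1 t chi" and chi2: "kernel_chi2 chi"
    and chi3: "kernel_chi3 chi L \<psi>" and chi4: "kernel_chi4 t chi \<theta>\<^sub>0"
    and L1: "cond_L1 L" and L2: "cond_L2 t L"
    and phi: "phi_function \<phi>" "convex_on {0..} \<phi>" and eta: "phi_function \<eta>" "convex_on {0..} \<eta>"
    and H: "cond_H \<phi> \<eta> \<psi>" and f: "f \<in> orlicz (\<lambda>u. \<phi> u + \<eta> u)"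
    and M1: "0 < M\<^sub>1" and tail: "\<exists>W. \<forall>w\<ge>W.
      w * (LINT y:{y. \<bar>y\<bar> > 1 / w powr \<alpha>}|lebesgue. L (w * y)) \<le> M\<^sub>1 * w powr (- \<alpha>\<^sub>0)"
  shows "\<exists>\<mu>>0. \<exists>W. \<forall>w\<ge>W. modular \<phi> (\<lambda>x. \<mu> * (sampling_kantorovich t chi w f x - f x))
      \<le> ennreal ((LINT x|lebesgue. L x) / (3 * \<delta> * m0 t L)) * modulus \<eta> (1 / 2) f (1 / w powr \<alpha>)
       + ennreal (M\<^sub>1 / (3 * \<delta> * m0 t L)) * modular \<eta> f * ennreal (w powr (- \<alpha>\<^sub>0))
       + ennreal (\<Delta> / (3 * \<delta>)) * modulus \<eta> (1 / 2) f (\<Delta> / w)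
       + ennreal (1 / 3) * modular \<phi> f * ennreal (w powr (- \<theta>\<^sub>0))"
proof -
  have f_meas: "f \<in> borel_measurable lebesgue" using f unfolding orlicz_def by simp
  obtain g where g[measurable]: "g \<in> borel_measurable borel" and fg: "AE x in lborel. f x = g x"
    using completion_ex_borel_measurable_real[OF f_meas] by auto
  have g_orlicz: "g \<in> orlicz \<phi>"
    by (rule orlicz_add_subset[OF phi_function_nonneg[OF eta(1)] orlicz_cong_AE[OF f g fg]])
  have "sampling_kantorovich t chi w f x = sampling_kantorovich t chi w g x" for w x
    using f_meas g fg by (rule sampling_kantorovich_cong_AE)
  then have S_eq: "modular \<phi> (\<lambda>x. \<mu> * (sampling_kantorovich t chi w f x - f x))
      = modular \<phi> (\<lambda>x. \<mu> * (sampling_kantorovich t chi w g x - g x))" for \<mu> w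
    using fg by (intro modular_cong_AE) (auto elim: eventually_mono)
  have modular_eq: "modular h f = modular h g" for h
    using fg by (rule modular_cong_AE)
  obtain W\<^sub>1 where "\<And>w. W\<^sub>1 \<le> w \<Longrightarrow>
      w * (LINT y:{y. 1 / w powr \<alpha> < \<bar>y\<bar>}|lebesgue. L (w * y)) \<le> M\<^sub>1 * w powr (- \<alpha>\<^sub>0)"
    using tail by auto
  then show ?thesis
    unfolding S_eq modular_eq modulus_cong_AE[OF fg]
    by (rule sampling_kantorovich_modular_estimate_borel[OF samp chi1 chi2 chi3 chi4 L1 L2 phi eta H g
          g_orlicz M1])
qed

theorem theorem3p1:
  fixes t :: "int \<Rightarrow> real" and \<delta> \<Delta> :: real
    and chi :: "real \<Rightarrow> real \<Rightarrow> real" and L \<psi> \<phi> \<eta> f :: "real \<Rightarrow> real"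
    and \<theta>\<^sub>0 \<alpha> M\<^sub>1 \<alpha>\<^sub>0 :: real
  assumes samp: "sampling_sequence t \<delta> \<Delta>"
    and chi1: "kernel_chi1 t chi" and chi2: "kernel_chi2 chi"
    and chi3: "kernel_chi3 chi L \<psi>" and chi4: "kernel_chi4 t chi \<theta>\<^sub>0"
    and L1: "cond_L1 L" and L2: "cond_L2 t L"
    and phi: "phi_function \<phi>" and phi_convex: "convex_on {0..} \<phi>"
    and eta: "phi_function \<eta>" and eta_convex: "convex_on {0..} \<eta>"
    and H: "cond_H \<phi> \<eta> \<psi>"
    and f: "f \<in> orlicz (\<lambda>u. \<phi> u + \<eta> u)"
    and alpha: "0 < \<alpha>" "\<alpha> < 1"
    and M1: "M\<^sub>1 > 0" and alpha0: "\<alpha>\<^sub>0 > 0"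
    and tail: "\<exists>W. \<forall>w\<ge>W. w * (LINT y:{y. \<bar>y\<bar> > 1 / w powr \<alpha>}|lebesgue. L (w * y))
                          \<le> M\<^sub>1 * w powr (- \<alpha>\<^sub>0)"
  shows "\<exists>\<mu>>0. \<exists>lam\<^sub>0>0. \<exists>lam>0. \<exists>W. \<forall>w\<ge>W.
    modular \<phi> (\<lambda>x. \<mu> * (sampling_kantorovich t chi w f x - f x))
      \<le> ennreal ((LINT x|lebesgue. L x) / (3 * \<delta> * m0 t L)) * modulus \<eta> lam f (1 / w powr \<alpha>)
       + ennreal (M\<^sub>1 / (3 * \<delta> * m0 t L)) * modular \<eta> (\<lambda>x. lam\<^sub>0 * f x) * ennreal (w powr (- \<alpha>\<^sub>0))
       + ennreal (\<Delta> / (3 * \<delta>)) * modulus \<eta> lam f (\<Delta> / w)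
       + ennreal (1 / 3) * modular \<phi> (\<lambda>x. lam\<^sub>0 * f x) * ennreal (w powr (- \<theta>\<^sub>0))"
proof -
  obtain \<mu> W where "0 < \<mu>" and "\<forall>w\<ge>W. modular \<phi> (\<lambda>x. \<mu> * (sampling_kantorovich t chi w f x - f x))
      \<le> ennreal ((LINT x|lebesgue. L x) / (3 * \<delta> * m0 t L)) * modulus \<eta> (1 / 2) f (1 / w powr \<alpha>)
       + ennreal (M\<^sub>1 / (3 * \<delta> * m0 t L)) * modular \<eta> (\<lambda>x. 1 * f x) * ennreal (w powr (- \<alpha>\<^sub>0))
       + ennreal (\<Delta> / (3 * \<delta>)) * modulus \<eta> (1 / 2) f (\<Delta> / w)
       + ennreal (1 / 3) * modular \<phi> (\<lambda>x. 1 * f x) * ennreal (w powr (- \<theta>\<^sub>0))"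
    using sampling_kantorovich_modular_estimate[OF samp chi1 chi2 chi3 chi4 L1 L2 phi phi_convex eta eta_convex
        H f M1 tail] by auto
  moreover have "(0::real) < 1" "(0::real) < 1 / 2" by simp_all
  ultimately show ?thesis by blast
qed

end
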